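(* Let $d\ge5$. Let $X^1,X^2$ be independent simple random walks on $\mathbb{Z}^d$ started at the origin, and let $X=(X(t))_{t\in\mathbb{Z}}$ be the two-sided walk $X(t)=X^1(t)$ for $t\ge0$ and $X(t)=X^2(-t)$ for $t\le0$. There exist constants $\xi=\xi(d)\in(0,\infty)$ and $C=C(d)\in(0,\infty)$ such that for every integer $N\ge2$, \[ \mathbf P\big(\exists\, j\in\{1,\dots,N\}:\ X(-\infty,j]\cap X[j+1,\infty)=\emptyset\big)\ge 1-C(\log N)^{\xi}N^{(4-d)/2}. \]
   Context: $X[a,b]$ (with $a$ possibly $-\infty$, $b$ possibly $\infty$) denotes the set of vertices visited by $X$ at times $t\in[a,b]\cap\mathbb{Z}$. *)

theory Defs
  imports "HOL-Probability.Probability"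
begin

text \<open>Lattice points of Z^d are modelled as int^'d, with d = CARD('d).\<close>

definition unit_steps :: "(int ^ 'd) set" where
  "unit_steps = {v. \<exists>k. \<exists>s\<in>{-1, 1}. v = (\<chi> i. if i = k then s else 0)}"

definition srw_step :: "(int ^ 'd) measure" where
  "srw_step = measure_pmf (pmf_of_set unit_steps)"

definition step_space :: "(nat \<Rightarrow> int ^ 'd) measure" where
  "step_space = (\<Pi>\<^sub>M i\<in>(UNIV :: nat set). srw_step)"

definition walk :: "(nat \<Rightarrow> int ^ 'd) \<Rightarrow> nat \<Rightarrow> int ^ 'd" where
  "walk s n = (\<Sum>i<n. s i)"

definition two_walk_space :: "((nat \<Rightarrow> int ^ 'd) \<times> (nat \<Rightarrow> int ^ 'd)) measure" where
  "two_walk_space = step_space \<Otimes>\<^sub>M step_space"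

definition two_sided :: "(nat \<Rightarrow> int ^ 'd) \<times> (nat \<Rightarrow> int ^ 'd) \<Rightarrow> int \<Rightarrow> int ^ 'd" where
  "two_sided \<omega> t = (if t \<ge> 0 then walk (fst \<omega>) (nat t) else walk (snd \<omega>) (nat (- t)))"

end

theory Submission
  imports Defs
begin

text \<open>
  Write \<open>D(t) = X(t) - X(t - 1)\<close>, \<open>t \<in> \<int>\<close>, for the increments of the two-sided walk; they are
  i.i.d. and uniform on the \<open>2d\<close> unit vectors, and \<open>j\<close> is a cut time iff no sum
  \<open>D(a + 1) + \<dots> + D(b)\<close> with \<open>a \<le> j < b\<close> vanishes.  The local limit bound
  \<open>P(D(1) + \<dots> + D(n) = x) \<le> C n^(-d/2)\<close> (obtained by conditioning on the axes of the steps) shows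
  that a loop of length \<open>> m\<close> straddling a fixed \<open>j\<close> has probability \<open>\<le> C m^(2-d/2)\<close>.

  Cut \<open>[1, N]\<close> into \<open>K \<approx> (s/c) log N\<close> disjoint windows of length \<open>2m \<approx> N/K\<close>, where
  \<open>s = (d - 4)/2\<close>.  The centre of a window is a local cut time (no straddling loop inside the window)
  with probability at least some \<open>c > 0\<close>: force the central \<open>2L\<close> steps to point in one direction;
  then every straddling loop has length \<open>\<ge> 2L\<close>, and for large \<open>L\<close> these are unlikely.  By
  independence, no centre is a local cut time with probability \<open>\<le> (1 - c)^K \<le> N^(-s)\<close>, and a long
  loop straddling one of the \<open>K\<close> centres has probability \<open>\<le> K C m^(-s) = O((log N)^(s+1) N^(-s))\<close>.
\<close>

section \<open>Events determined by finitely many coordinates\<close>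

definition determined_by :: "'i set \<Rightarrow> (('i \<Rightarrow> 'a) \<Rightarrow> bool) \<Rightarrow> bool" where
  "determined_by J P \<longleftrightarrow> (\<forall>f g. (\<forall>x\<in>J. f x = g x) \<longrightarrow> P f = P g)"

lemma determined_byI:
  assumes "\<And>f g. (\<And>x. x \<in> J \<Longrightarrow> f x = g x) \<Longrightarrow> P f = P g"
  shows "determined_by J P"
  using assms unfolding determined_by_def by blast

lemma determined_byD:
  "determined_by J P \<Longrightarrow> (\<And>x. x \<in> J \<Longrightarrow> f x = g x) \<Longrightarrow> P f = P g"
  unfolding determined_by_def by blast

lemma determined_by_mono: "determined_by A P \<Longrightarrow> A \<subseteq> B \<Longrightarrow> determined_by B P"
  unfolding determined_by_def by blast

lemma determined_by_comp:
  assumes "determined_by J P"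
  shows "determined_by J (\<lambda>f. h (P f))"
  by (rule determined_byI, rule arg_cong[of _ _ h], rule determined_byD[OF assms]) auto

lemma determined_by_Ball:
  fixes P :: "'j \<Rightarrow> ('i \<Rightarrow> 'a) \<Rightarrow> bool"
  assumes "\<And>i. i \<in> I \<Longrightarrow> determined_by (A i) (P i)"
  shows "determined_by (\<Union>i\<in>I. A i) (\<lambda>f. \<forall>i\<in>I. P i f)"
proof (rule determined_byI)
  fix f g :: "'i \<Rightarrow> 'a"
  assume "\<And>x. x \<in> (\<Union>i\<in>I. A i) \<Longrightarrow> f x = g x"
  then have "P i f = P i g" if "i \<in> I" for i
    using determined_byD[OF assms[OF that]] that by blast
  then show "(\<forall>i\<in>I. P i f) = (\<forall>i\<in>I. P i g)" by blast
qed

lemma determined_by_sum_eq: "determined_by A (\<lambda>f. (\<Sum>t\<in>A. f t) = y)"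
  by (rule determined_byI) (metis (mono_tags, lifting) sum.cong)

lemma prob_Pi_pmf_default_cong:
  assumes "finite J" "determined_by J P"
  shows "measure_pmf.prob (Pi_pmf J d1 p) {f. P f} = measure_pmf.prob (Pi_pmf J d2 p) {f. P f}"
proof -
  let ?reset = "\<lambda>f x. if x \<in> J then f x else d2"
  have "?reset -` {f. P f} = {f. P f}"
    using determined_byD[OF assms(2), of "?reset _"] by auto
  then show ?thesis
    by (simp flip: Pi_pmf_default_swap[OF assms(1), where dflt = d1 and dflt' = d2 and p = p])
qed

lemma prob_pair_pmf_Times:
  "measure_pmf.prob (pair_pmf M N) (A \<times> B) = measure_pmf.prob M A * measure_pmf.prob N B"
proof -
  have "(A \<times> B) \<inter> set_pmf (pair_pmf M N) = (A \<inter> set_pmf M) \<times> (B \<inter> set_pmf N)"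
    by auto
  then have "measure_pmf.prob (pair_pmf M N) (A \<times> B) =
      measure_pmf.prob (pair_pmf M N) ((A \<inter> set_pmf M) \<times> (B \<inter> set_pmf N))"
    by (metis measure_Int_set_pmf)
  also have "\<dots> = measure_pmf.prob M (A \<inter> set_pmf M) * measure_pmf.prob N (B \<inter> set_pmf N)"
    by (rule measure_pmf_prob_product) auto
  finally show ?thesis by (simp add: measure_Int_set_pmf)
qed

lemma prob_Pi_pmf_Un_indep:
  assumes "finite A" "finite B" "A \<inter> B = {}" "determined_by A P" "determined_by B Q"
  shows "measure_pmf.prob (Pi_pmf (A \<union> B) d p) {f. P f \<and> Q f} =
         measure_pmf.prob (Pi_pmf A d p) {f. P f} * measure_pmf.prob (Pi_pmf B d p) {f. Q f}"
proof -
  let ?glue = "\<lambda>(f, g) x. if x \<in> A then f x else g x"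
  have "P (?glue (f, g)) = P f" for f g
    by (rule determined_byD[OF assms(4)]) auto
  moreover have "Q (?glue (f, g)) = Q g" for f g
    by (rule determined_byD[OF assms(5)]) (use assms(3) in auto)
  ultimately have "?glue -` {f. P f \<and> Q f} = {f. P f} \<times> {g. Q g}"
    by auto
  then show ?thesis
    by (simp add: Pi_pmf_union[OF assms(1-3)] prob_pair_pmf_Times)
qed

lemma prob_Pi_pmf_superset:
  assumes "finite B" "A \<subseteq> B" "determined_by A P"
  shows "measure_pmf.prob (Pi_pmf B d p) {f. P f} = measure_pmf.prob (Pi_pmf A d p) {f. P f}"
proof -
  have "B = A \<union> (B - A)" using assms(2) by auto
  then have "measure_pmf.prob (Pi_pmf B d p) {f. P f} =
      measure_pmf.prob (Pi_pmf (A \<union> (B - A)) d p) {f. P f \<and> True}"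
    by simp
  also have "\<dots> = measure_pmf.prob (Pi_pmf A d p) {f. P f}"
    using assms finite_subset[OF assms(2,1)]
    by (subst prob_Pi_pmf_Un_indep) (auto simp: determined_by_def)
  finally show ?thesis .
qed

lemma prob_Pi_pmf_UN_indep:
  assumes "finite I" "\<And>i. i \<in> I \<Longrightarrow> finite (A i)" "disjoint_family_on A I"
    "\<And>i. i \<in> I \<Longrightarrow> determined_by (A i) (P i)"
  shows "measure_pmf.prob (Pi_pmf (\<Union>i\<in>I. A i) d p) {f. \<forall>i\<in>I. P i f} =
         (\<Prod>i\<in>I. measure_pmf.prob (Pi_pmf (A i) d p) {f. P i f})"
  using assms
proof (induction I rule: finite_induct)
  case empty
  then show ?case by simp
next
  case (insert i I)
  have "A i \<inter> (\<Union>j\<in>I. A j) = {}"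
    using insert.prems(2) insert.hyps(2) by (fastforce simp: disjoint_family_on_def)
  moreover have "determined_by (\<Union>j\<in>I. A j) (\<lambda>f. \<forall>j\<in>I. P j f)"
    using insert.prems(3) by (intro determined_by_Ball) auto
  ultimately have "measure_pmf.prob (Pi_pmf (A i \<union> (\<Union>j\<in>I. A j)) d p) {f. P i f \<and> (\<forall>j\<in>I. P j f)}
      = measure_pmf.prob (Pi_pmf (A i) d p) {f. P i f} *
        measure_pmf.prob (Pi_pmf (\<Union>j\<in>I. A j) d p) {f. \<forall>j\<in>I. P j f}"
    using insert by (intro prob_Pi_pmf_Un_indep) auto
  moreover have "disjoint_family_on A I"
    using insert.prems(2) by (auto simp: disjoint_family_on_def)
  ultimately show ?case
    using insert by simp
qed

section \<open>Sums of Rademacher variables\<close>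

lemma central_binomial_Suc:
  "(2*k+2 choose (k+1)) * (k+1)^2 = (2*k+1) * (2*k+2) * (2*k choose k)"
proof -
  have a: "(2*k+2 choose (k+1)) * (k+1) = (2*k+2) * ((2*k+1) choose k)"
    using Suc_times_binomial_eq[of "2*k+1" k] by (simp del: binomial_Suc_Suc)
  have b: "(k+1) * ((2*k+1) choose k) = (2*k+1) * (2*k choose k)"
    using binomial_absorb_comp[of "2*k+1" k] by (simp add: Suc_diff_le del: binomial_Suc_Suc)
  have "(2*k+2 choose (k+1)) * (k+1)^2 = (2*k+2) * ((k+1) * ((2*k+1) choose k))"
    by (metis a mult.assoc mult.commute power2_eq_square)
  also have "\<dots> = (2*k+1) * (2*k+2) * (2*k choose k)"
    unfolding b by (metis mult.assoc mult.commute)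
  finally show ?thesis .
qed

lemma central_binomial_Suc_ratio:
  "real (2*k+2 choose (k+1)) / 4^(k+1) =
   real (2*k choose k) / 4^k * ((2 * real k + 1) / (2 * real k + 2))"
proof -
  define x where "x = real (2*k choose k)"
  define y where "y = real (2*k+2 choose (k+1))"
  have "y * (real k + 1) * (real k + 1) = (2 * real k + 1) * 2 * x * (real k + 1)"
    using arg_cong[OF central_binomial_Suc[of k], of real] unfolding x_def y_def
    by (simp add: algebra_simps power2_eq_square del: binomial_Suc_Suc)
  then have "y * (real k + 1) = (2 * real k + 1) * 2 * x"
    by (simp del: binomial_Suc_Suc)
  then have "y = (2 * real k + 1) * 2 * x / (real k + 1)"
    by (simp add: field_simps)
  then have "y / 4^(k+1) = (2 * real k + 1) * 2 * x / (real k + 1) / (4 * 4^k)"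
    by simp
  also have "\<dots> = x / 4^k * ((2 * real k + 1) / (2 * real k + 2))"
    by (simp add: divide_simps add_pos_pos) (simp add: algebra_simps)
  finally show ?thesis
    unfolding x_def y_def .
qed

lemma central_binomial_sq_le: "(real (2*k choose k) / 4^k)^2 \<le> 1 / (2 * real k + 1)"
proof (induction k)
  case 0
  then show ?case by simp
next
  case (Suc k)
  let ?r = "(2 * real k + 1) / (2 * real k + 2)"
  have "(real (2*k+2 choose (k+1)) / 4^(k+1))^2 = (real (2*k choose k) / 4^k)^2 * ?r^2"
    by (simp only: central_binomial_Suc_ratio power_mult_distrib)
  also have "\<dots> \<le> 1 / (2 * real k + 1) * ?r^2"
    by (rule mult_right_mono[OF Suc.IH]) simp
  also have "\<dots> = (2 * real k + 1) / (2 * real k + 2)^2"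
    by (simp add: power2_eq_square)
  also have "\<dots> \<le> 1 / (2 * real k + 3)"
  proof -
    have "(2 * real k + 1) * (2 * real k + 3) \<le> (2 * real k + 2)^2"
      by (simp add: power2_eq_square algebra_simps)
    then show ?thesis by (simp add: divide_simps)
  qed
  finally show ?case
    by (simp add: add.commute)
qed

lemma central_binomial_le: "real (2*k choose k) / 4^k \<le> 1 / sqrt (2 * real k + 1)"
  using real_sqrt_le_mono[OF central_binomial_sq_le[of k]] by (simp add: real_sqrt_divide)

lemma binomial_div_two_power_le:
  assumes "m > 0"
  shows "real (m choose j) / 2^m \<le> 1 / sqrt m"
proof -
  have "real (m choose j) / 2^m \<le> real (m choose (m div 2)) / 2^m"
    by (intro divide_right_mono) (use binomial_maximum in auto)
  also have "\<dots> \<le> 1 / sqrt m"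
  proof (cases "even m")
    case True
    then obtain k where k: "m = 2*k" by auto
    have "real (m choose (m div 2)) / 2^m = real (2*k choose k) / 4^k"
      by (simp add: k power_mult)
    also have "\<dots> \<le> 1 / sqrt (2*real k+1)" by (rule central_binomial_le)
    also have "\<dots> \<le> 1 / sqrt m" using assms k
      by (intro divide_left_mono real_sqrt_le_mono) auto
    finally show ?thesis .
  next
    case False
    then obtain k where k: "m = 2*k+1" using oddE by blast
    have b: "(k+1) * ((2*k+1) choose k) = (2*k+1) * (2*k choose k)"
      using binomial_absorb_comp[of "2*k+1" k] by (simp add: Suc_diff_le)
    have b': "real ((2*k+1) choose k) = (2*real k+1) * real (2*k choose k) / (real k+1)"
      using arg_cong[OF b, of real] by (simp add: field_simps)
    have "m div 2 = k" using k by simp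
    then have "real (m choose (m div 2)) / 2^m = real ((2*k+1) choose k) / (2 * 4^k)"
      by (simp add: k power_mult)
    also have "\<dots> = (real (2*k choose k) / 4^k) * ((2*real k+1) / (2*real k+2))"
      unfolding b' by (simp add: field_simps)
    also have "\<dots> \<le> real (2*k choose k) / 4^k * 1"
      by (intro mult_left_mono) auto
    also have "\<dots> \<le> 1 / sqrt (2*real k+1)" using central_binomial_le by simp
    also have "\<dots> = 1 / sqrt m" by (simp add: k)
    finally show ?thesis .
  qed
  finally show ?thesis .
qed

definition rademacher :: "int pmf" where "rademacher = pmf_of_set {-1, 1}"

lemma rademacher_eq_map_bernoulli: "rademacher = map_pmf (\<lambda>b. if b then 1 else -1) (bernoulli_pmf (1/2))"
proof -
  have "map_pmf (\<lambda>b. if b then 1 else -1::int) (pmf_of_set UNIV) =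
        pmf_of_set ((\<lambda>b. if b then 1 else -1::int) ` UNIV)"
    by (rule map_pmf_of_set_inj) (auto simp: inj_on_def)
  also have "(\<lambda>b. if b then 1 else -1::int) ` UNIV = {-1, 1}"
    by (auto simp: UNIV_bool)
  finally show ?thesis unfolding rademacher_def bernoulli_pmf_half_conv_pmf_of_set by simp
qed

lemma sum_signs_eq:
  "finite A \<Longrightarrow> (\<Sum>t\<in>A. (if v t then 1 else -1::int)) = 2 * int (card {t\<in>A. v t}) - int (card A)"
proof (induction A rule: finite_induct)
  case empty
  then show ?case by simp
next
  case (insert x A)
  have c: "{t \<in> insert x A. v t} = (if v x then insert x {t\<in>A. v t} else {t\<in>A. v t})" by auto
  have "x \<notin> {t\<in>A. v t}" using insert by auto
  moreover have "finite {t\<in>A. v t}" using insert by auto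
  ultimately show ?case using insert c by (auto simp: card_insert_if)
qed

lemma pmf_binomial_half_le:
  assumes "m > 0"
  shows "pmf (binomial_pmf m (1/2)) k \<le> 1 / sqrt m"
proof (cases "k \<le> m")
  case True
  then have "(1/2::real)^k * (1/2)^(m - k) = (1/2)^m"
    by (metis power_add le_add_diff_inverse)
  then have "pmf (binomial_pmf m (1/2)) k = real (m choose k) / 2^m"
    by (simp add: pmf_binomial power_one_over mult.assoc)
  also have "\<dots> \<le> 1 / sqrt m"
    using assms by (rule binomial_div_two_power_le)
  finally show ?thesis .
qed (simp add: pmf_binomial binomial_eq_0)

lemma prob_rademacher_sum_eq_le:
  assumes "finite A" "card A > 0"
  shows "measure_pmf.prob (Pi_pmf A d (\<lambda>_. rademacher)) {s. (\<Sum>t\<in>A. s t) = y} \<le> 1 / sqrt (card A)"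
proof -
  let ?sign = "\<lambda>b. if b then 1 else -1::int"
  let ?heads = "\<lambda>v. card {t\<in>A. v t}"
  define K where "K = {k. 2 * int k - int (card A) = y}"
  have "measure_pmf.prob (Pi_pmf A d (\<lambda>_. rademacher)) {s. (\<Sum>t\<in>A. s t) = y} =
        measure_pmf.prob (Pi_pmf A (-1) (\<lambda>_. rademacher)) {s. (\<Sum>t\<in>A. s t) = y}"
    by (rule prob_Pi_pmf_default_cong[OF assms(1) determined_by_sum_eq])
  also have "Pi_pmf A (-1) (\<lambda>_. rademacher) = map_pmf (\<lambda>h. ?sign \<circ> h) (Pi_pmf A False (\<lambda>_. bernoulli_pmf (1/2)))"
    unfolding rademacher_eq_map_bernoulli by (rule Pi_pmf_map) (auto simp: assms)
  also have "{v. (\<Sum>t\<in>A. ?sign (v t)) = y} = ?heads -` K"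
    using sum_signs_eq[OF assms(1)] by (auto simp: K_def)
  then have "measure_pmf.prob (map_pmf (\<lambda>h. ?sign \<circ> h) (Pi_pmf A False (\<lambda>_. bernoulli_pmf (1/2)))) {s. (\<Sum>t\<in>A. s t) = y}
      = measure_pmf.prob (map_pmf ?heads (Pi_pmf A False (\<lambda>_. bernoulli_pmf (1/2)))) K"
    by simp
  also have "map_pmf ?heads (Pi_pmf A False (\<lambda>_. bernoulli_pmf (1/2))) = binomial_pmf (card A) (1/2)"
    by (rule binomial_pmf_altdef'[symmetric]) (auto simp: assms)
  also have "measure_pmf.prob (binomial_pmf (card A) (1/2)) K \<le> 1 / sqrt (card A)"
  proof (cases "K = {}")
    case False
    then obtain k where "K = {k}"
      by (auto simp: K_def)
    then show ?thesis
      using pmf_binomial_half_le[OF assms(2)] by (simp add: measure_pmf_single)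
  qed simp
  finally show ?thesis .
qed

section \<open>A local limit bound for sums of unit steps\<close>

definition axis_vec :: "'d \<Rightarrow> int \<Rightarrow> int^'d" where "axis_vec k s = (\<chi> i. if i = k then s else 0)"

lemma axis_vec_nth [simp]: "axis_vec k s $ i = (if i = k then s else 0)"
  by (simp add: axis_vec_def)

lemma unit_steps_eq_image: "(unit_steps :: (int^'d) set) = (\<lambda>(k,s). axis_vec k s) ` (UNIV \<times> {-1,1})"
  unfolding unit_steps_def axis_vec_def by auto

lemma inj_on_axis_vec: "inj_on (\<lambda>(k,s). axis_vec k s :: int^'d) (UNIV \<times> {-1,1})"
proof (rule inj_onI, clarify)
  fix k k' :: 'd and s s' :: int
  assume s: "s \<in> {-1,1}" "s' \<in> {-1,1}" and e: "axis_vec k s = axis_vec k' s'"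
  have "axis_vec k s $ k = axis_vec k' s' $ k" using e by simp
  then have 1: "s = (if k = k' then s' else 0)" by simp
  then have "k = k'" using s by (auto split: if_splits)
  then show "k = k' \<and> s = s'" using 1 by simp
qed

lemma axis_vec_in_unit_steps: "s \<in> {-1, 1} \<Longrightarrow> axis_vec k s \<in> unit_steps"
  unfolding unit_steps_eq_image by auto

lemma finite_unit_steps [simp]: "finite (unit_steps :: (int^'d) set)"
  unfolding unit_steps_eq_image by simp

lemma card_unit_steps: "card (unit_steps :: (int^'d) set) = 2 * CARD('d)"
  unfolding unit_steps_eq_image by (subst card_image[OF inj_on_axis_vec]) (simp add: card_cartesian_product)

lemma unit_steps_nonempty [simp]: "(unit_steps :: (int^'d) set) \<noteq> {}"
  unfolding unit_steps_eq_image by simp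

lemma abs_unit_step_nth_le: "u \<in> unit_steps \<Longrightarrow> \<bar>u $ i\<bar> \<le> 1"
  unfolding unit_steps_eq_image by auto

lemma pmf_of_set_Times:
  assumes "finite A" "A \<noteq> {}" "finite B" "B \<noteq> {}"
  shows "pmf_of_set (A \<times> B) = pair_pmf (pmf_of_set A) (pmf_of_set B)"
proof (rule pmf_eqI)
  fix z :: "'a \<times> 'b"
  obtain a b where z: "z = (a, b)" by fastforce
  have "finite (A \<times> B)" "A \<times> B \<noteq> {}" using assms by auto
  then have "pmf (pmf_of_set (A \<times> B)) z = indicator (A \<times> B) z / real (card (A \<times> B))"
    by (subst pmf_of_set) auto
  also have "\<dots> = (indicator A a / real (card A)) * (indicator B b / real (card B))"
    by (simp add: z card_cartesian_product indicator_def)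
  also have "\<dots> = pmf (pair_pmf (pmf_of_set A) (pmf_of_set B)) z"
    by (simp add: z pmf_pair assms)
  finally show "pmf (pmf_of_set (A \<times> B)) z = pmf (pair_pmf (pmf_of_set A) (pmf_of_set B)) z" .
qed

lemma pmf_of_set_unit_steps_eq_bind:
  "pmf_of_set (unit_steps :: (int^'d) set) = bind_pmf (pmf_of_set UNIV) (\<lambda>k. map_pmf (axis_vec k) rademacher)"
proof -
  have "map_pmf (\<lambda>(k,s). axis_vec k s :: int^'d) (pmf_of_set (UNIV \<times> {-1,1})) =
        pmf_of_set ((\<lambda>(k,s). axis_vec k s) ` (UNIV \<times> {-1,1}))"
    by (rule map_pmf_of_set_inj[OF inj_on_axis_vec]) auto
  then have "pmf_of_set (unit_steps :: (int^'d) set) =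
       map_pmf (\<lambda>(k,s). axis_vec k s) (pmf_of_set (UNIV \<times> {-1,1}))"
    unfolding unit_steps_eq_image by simp
  also have "pmf_of_set (UNIV \<times> {-1,1::int}) = pair_pmf (pmf_of_set (UNIV::'d set)) rademacher"
    unfolding rademacher_def by (rule pmf_of_set_Times) auto
  also have "map_pmf (\<lambda>(k,s). axis_vec k s) (pair_pmf (pmf_of_set (UNIV::'d set)) rademacher) =
      bind_pmf (pmf_of_set UNIV) (\<lambda>k. map_pmf (axis_vec k) rademacher)"
    by (simp add: pair_pmf_def map_bind_pmf map_pmf_def bind_return_pmf bind_assoc_pmf)
  finally show ?thesis .
qed

definition peak_bound :: "nat \<Rightarrow> real" where "peak_bound m = (if m = 0 then 1 else 1 / sqrt m)"

lemma peak_bound_le_one: "peak_bound m \<le> 1"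
  by (auto simp: peak_bound_def)

lemma peak_bound_nonneg: "peak_bound m \<ge> 0"
  by (auto simp: peak_bound_def)

lemma Pi_pmf_map_axis_vec:
  assumes "finite J"
  shows "Pi_pmf J dflt (\<lambda>t. map_pmf (axis_vec (kk t)) rademacher) =
         map_pmf (\<lambda>ss t. if t \<in> J then axis_vec (kk t) (ss t) else dflt) (Pi_pmf J 0 (\<lambda>_. rademacher))"
proof -
  have "Pi_pmf J dflt (\<lambda>t. map_pmf (axis_vec (kk t)) rademacher) =
        Pi_pmf J dflt (\<lambda>t. bind_pmf rademacher (\<lambda>s. return_pmf (axis_vec (kk t) s)))"
    by (simp add: map_pmf_def)
  also have "\<dots> = bind_pmf (Pi_pmf J 0 (\<lambda>_. rademacher)) (\<lambda>ss. Pi_pmf J dflt (\<lambda>t. return_pmf (axis_vec (kk t) (ss t))))"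
    by (rule Pi_pmf_bind[OF assms])
  also have "\<dots> = map_pmf (\<lambda>ss t. if t \<in> J then axis_vec (kk t) (ss t) else dflt) (Pi_pmf J 0 (\<lambda>_. rademacher))"
    using assms by (simp add: map_pmf_def)
  finally show ?thesis .
qed

lemma sum_axis_vec_nth:
  assumes "finite J"
  shows "(\<Sum>t\<in>J. axis_vec (kk t) (ss t)) $ i = (\<Sum>t\<in>{t\<in>J. kk t = i}. ss t)"
proof -
  have "(\<Sum>t\<in>J. axis_vec (kk t) (ss t)) $ i = (\<Sum>t\<in>J. if kk t = i then ss t else 0)"
    by (simp add: sum_component) (rule sum.cong, auto)
  also have "\<dots> = (\<Sum>t\<in>{t\<in>J. kk t = i}. ss t)"
    by (rule sum.inter_filter[symmetric, OF assms])
  finally show ?thesis .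
qed

lemma prob_axis_sum_eq_le:
  fixes J :: "'i set" and kk :: "'i \<Rightarrow> 'd::finite" and x :: "int^'d"
  assumes "finite J"
  shows "measure_pmf.prob (Pi_pmf J dflt (\<lambda>t. map_pmf (axis_vec (kk t)) rademacher)) {f. (\<Sum>t\<in>J. f t) = x}
         \<le> (\<Prod>i\<in>UNIV. peak_bound (card {t\<in>J. kk t = i}))"
proof -
  define A where "A i = {t\<in>J. kk t = i}" for i
  let ?h = "\<lambda>ss t. if t \<in> J then axis_vec (kk t) (ss t) else dflt"
  have finA: "finite (A i)" for i
    using assms by (auto simp: A_def)
  have "(\<Sum>t\<in>J. ?h ss t) = (\<Sum>t\<in>J. axis_vec (kk t) (ss t))" for ss
    by (rule sum.cong) auto
  then have "(\<Sum>t\<in>J. ?h ss t) = x \<longleftrightarrow> (\<forall>i\<in>UNIV. (\<Sum>t\<in>A i. ss t) = x $ i)" for ss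
    by (simp only: vec_eq_iff sum_axis_vec_nth[OF assms] A_def ball_UNIV)
  then have "?h -` {f. (\<Sum>t\<in>J. f t) = x} = {ss. \<forall>i\<in>UNIV. (\<Sum>t\<in>A i. ss t) = x $ i}"
    by auto
  then have "measure_pmf.prob (Pi_pmf J dflt (\<lambda>t. map_pmf (axis_vec (kk t)) rademacher)) {f. (\<Sum>t\<in>J. f t) = x}
      = measure_pmf.prob (Pi_pmf J 0 (\<lambda>_. rademacher)) {ss. \<forall>i\<in>UNIV. (\<Sum>t\<in>A i. ss t) = x $ i}"
    by (simp only: Pi_pmf_map_axis_vec[OF assms] measure_map_pmf)
  moreover have JA: "J = (\<Union>i\<in>UNIV. A i)"
    by (auto simp: A_def)
  moreover have "measure_pmf.prob (Pi_pmf (\<Union>i\<in>UNIV. A i) 0 (\<lambda>_. rademacher)) {ss. \<forall>i\<in>UNIV. (\<Sum>t\<in>A i. ss t) = x $ i}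
      = (\<Prod>i\<in>UNIV. measure_pmf.prob (Pi_pmf (A i) 0 (\<lambda>_. rademacher)) {ss. (\<Sum>t\<in>A i. ss t) = x $ i})"
    using finA by (intro prob_Pi_pmf_UN_indep determined_by_sum_eq) (auto simp: disjoint_family_on_def A_def)
  ultimately have "measure_pmf.prob (Pi_pmf J dflt (\<lambda>t. map_pmf (axis_vec (kk t)) rademacher)) {f. (\<Sum>t\<in>J. f t) = x}
      = (\<Prod>i\<in>UNIV. measure_pmf.prob (Pi_pmf (A i) 0 (\<lambda>_. rademacher)) {ss. (\<Sum>t\<in>A i. ss t) = x $ i})"
    by simp
  also have "\<dots> \<le> (\<Prod>i\<in>UNIV. peak_bound (card (A i)))"
  proof (intro prod_mono conjI)
    fix i :: 'd
    show "measure_pmf.prob (Pi_pmf (A i) 0 (\<lambda>_. rademacher)) {ss. (\<Sum>t\<in>A i. ss t) = x $ i} \<le> peak_bound (card (A i))"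
      using prob_rademacher_sum_eq_le[OF finA, of i 0 "x $ i"] by (cases "card (A i) = 0") (simp_all add: peak_bound_def)
  qed simp
  finally show ?thesis by (simp add: A_def)
qed

lemma map_pmf_eq_bernoulli:
  "map_pmf (\<lambda>k. k = i) (pmf_of_set (UNIV::'d::finite set)) = bernoulli_pmf (1 / real CARD('d))"
proof (rule pmf_eqI)
  fix b :: bool
  have d0: "real CARD('d) > 0" by simp
  have "pmf (map_pmf (\<lambda>k. k = i) (pmf_of_set (UNIV::'d set))) b =
        measure_pmf.prob (pmf_of_set (UNIV::'d set)) ((\<lambda>k. k = i) -` {b})"
    by (simp add: pmf_map)
  also have "\<dots> = real (card ((\<lambda>k. k = i) -` {b})) / real CARD('d)"
    by (subst measure_pmf_of_set) auto
  also have "\<dots> = pmf (bernoulli_pmf (1 / real CARD('d))) b"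
  proof (cases b)
    case True
    then have "(\<lambda>k. k = i) -` {b} = {i}" by auto
    then show ?thesis using True d0 by (simp add: pmf_bernoulli_True)
  next
    case False
    then have "(\<lambda>k. k = i) -` {b} = UNIV - {i}" by auto
    then have "real (card ((\<lambda>k. k = i) -` {b})) = real CARD('d) - 1"
      by (simp add: card_Diff_singleton of_nat_diff)
    then show ?thesis using False d0 by (simp add: pmf_bernoulli_False field_simps)
  qed
  finally show "pmf (map_pmf (\<lambda>k. k = i) (pmf_of_set UNIV)) b = pmf (bernoulli_pmf (1 / real CARD('d))) b" .
qed

lemma prob_axis_count_small_le:
  fixes J :: "'i set" and i :: "'d::finite"
  assumes "finite J" "card J > 0"
  shows "measure_pmf.prob (Pi_pmf J k0 (\<lambda>_. pmf_of_set (UNIV::'d set)))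
           {kk. real (card {t\<in>J. kk t = i}) < real (card J) / (2 * real CARD('d))}
         \<le> exp (- (real (card J) / (2 * real CARD('d)^2)))"
proof -
  let ?n = "card J" and ?d = "real CARD('d)"
  let ?f = "\<lambda>k::'d. k = i"
  let ?P = "\<lambda>c::nat. real c < real ?n / (2 * ?d)"
  have d0: "?d > 0" by simp
  have "Pi_pmf J (?f k0) (\<lambda>_. map_pmf ?f (pmf_of_set UNIV)) = map_pmf (\<lambda>h. ?f \<circ> h) (Pi_pmf J k0 (\<lambda>_. pmf_of_set UNIV))"
    by (rule Pi_pmf_map[OF assms(1)]) simp
  then have "measure_pmf.prob (Pi_pmf J k0 (\<lambda>_. pmf_of_set (UNIV::'d set))) {kk. ?P (card {t\<in>J. kk t = i})}
      = measure_pmf.prob (Pi_pmf J (?f k0) (\<lambda>_. bernoulli_pmf (1/?d))) {v. ?P (card {t\<in>J. v t})}"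
    by (simp add: map_pmf_eq_bernoulli)
  also have "\<dots> = measure_pmf.prob (map_pmf (\<lambda>v. card {t\<in>J. v t}) (Pi_pmf J (?f k0) (\<lambda>_. bernoulli_pmf (1/?d)))) {c. ?P c}"
    by simp
  also have "map_pmf (\<lambda>v. card {t\<in>J. v t}) (Pi_pmf J (?f k0) (\<lambda>_. bernoulli_pmf (1/?d))) = binomial_pmf ?n (1/?d)"
    by (rule binomial_pmf_altdef'[symmetric]) (use assms d0 in auto)
  also have "measure_pmf.prob (binomial_pmf ?n (1/?d)) {c. ?P c} \<le>
      measure_pmf.prob (binomial_pmf ?n (1/?d)) {c. real c \<le> real ?n * (1/?d) - real ?n / (2 * ?d)}"
  proof (rule measure_pmf.finite_measure_mono)
    have "real ?n * (1/?d) - real ?n / (2 * ?d) = real ?n / (2 * ?d)" by (simp add: field_simps)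
    then show "{c. ?P c} \<subseteq> {c. real c \<le> real ?n * (1/?d) - real ?n / (2 * ?d)}" by auto
  qed simp
  also have "\<dots> \<le> exp (- 2 * (real ?n / (2 * ?d))^2 / real ?n)"
  proof (rule binomial_distribution.prob_le)
    show "binomial_distribution (1/?d)" by unfold_locales (use d0 in auto)
  qed (use assms d0 in auto)
  also have "- 2 * (real ?n / (2 * ?d))^2 / real ?n = - (real ?n / (2 * ?d^2))"
    using assms d0 by (simp add: field_simps power2_eq_square)
  finally show ?thesis .
qed

lemma prod_peak_bound_le:
  fixes J :: "'i set" and kk :: "'i \<Rightarrow> 'd::finite" and \<tau> :: real
  assumes "\<tau> > 0"
  shows "(\<Prod>i\<in>UNIV. peak_bound (card {t\<in>J. kk t = i})) \<le>
         indicator {kk. \<exists>i. real (card {t\<in>J. kk t = i}) < \<tau>} kk + \<tau> powr (- (real CARD('d) / 2))"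
proof (cases "\<exists>i. real (card {t\<in>J. kk t = i}) < \<tau>")
  case True
  have "(\<Prod>i\<in>UNIV. peak_bound (card {t\<in>J. kk t = i})) \<le> (\<Prod>i\<in>(UNIV::'d set). 1)"
    by (rule prod_mono) (auto simp: peak_bound_le_one peak_bound_nonneg)
  also have "\<dots> \<le> 1 + \<tau> powr (- (real CARD('d) / 2))" by simp
  finally show ?thesis using True by simp
next
  case False
  have "(\<Prod>i\<in>UNIV. peak_bound (card {t\<in>J. kk t = i})) \<le> (\<Prod>i\<in>(UNIV::'d set). 1 / sqrt \<tau>)"
  proof (rule prod_mono, rule conjI)
    fix i
    show "0 \<le> peak_bound (card {t\<in>J. kk t = i})" by (rule peak_bound_nonneg)
    have c: "real (card {t\<in>J. kk t = i}) \<ge> \<tau>" using False by (auto simp: not_less)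
    then have "card {t\<in>J. kk t = i} \<noteq> 0" using assms by auto
    then show "peak_bound (card {t\<in>J. kk t = i}) \<le> 1 / sqrt \<tau>"
      unfolding peak_bound_def using c assms by (auto intro!: divide_left_mono real_sqrt_le_mono)
  qed
  also have "\<dots> = (1 / sqrt \<tau>) ^ CARD('d)" by simp
  also have "\<dots> = \<tau> powr (- (real CARD('d) / 2))"
  proof -
    have "(1 / sqrt \<tau>) ^ CARD('d) = 1 / (\<tau> powr (1/2)) ^ CARD('d)"
      using assms by (simp add: powr_half_sqrt power_one_over)
    also have "(\<tau> powr (1/2)) ^ CARD('d) = \<tau> powr (real CARD('d) / 2)"
      using assms by (simp add: powr_realpow[symmetric] powr_powr)
    finally show ?thesis using assms by (simp add: powr_minus_divide)
  qed
  finally show ?thesis using False by simp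
qed

lemma prob_some_axis_count_small_le:
  fixes J :: "'i set"
  assumes "finite J" "card J > 0"
  shows "measure_pmf.prob (Pi_pmf J k0 (\<lambda>_. pmf_of_set (UNIV::'d::finite set)))
           {kk. \<exists>i. real (card {t\<in>J. kk t = i}) < real (card J) / (2 * real CARD('d))}
         \<le> real CARD('d) * exp (- (real (card J) / (2 * real CARD('d)^2)))"
proof -
  let ?K = "Pi_pmf J k0 (\<lambda>_. pmf_of_set (UNIV::'d set))"
  let ?small = "\<lambda>i. {kk. real (card {t\<in>J. kk t = i}) < real (card J) / (2 * real CARD('d))}"
  have "measure_pmf.prob ?K (\<Union>i\<in>UNIV. ?small i) \<le> (\<Sum>i\<in>UNIV. measure_pmf.prob ?K (?small i))"
    by (rule measure_pmf.finite_measure_subadditive_finite) auto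
  also have "\<dots> \<le> (\<Sum>i\<in>(UNIV::'d set). exp (- (real (card J) / (2 * real CARD('d)^2))))"
    by (intro sum_mono prob_axis_count_small_le[OF assms])
  finally show ?thesis
    by (simp add: UN_iff Collect_ex_eq[symmetric])
qed

text \<open>Conditionally on the axes of the steps, the signs are independent Rademacher variables and
  each coordinate of the sum is a Rademacher sum over the steps along that axis; with high
  probability every axis is used at least \<open>n / (2d)\<close> times.\<close>

lemma prob_unit_sum_eq_le_exp:
  fixes J :: "'i set" and x :: "int^'d"
  assumes "finite J" "card J > 0"
  shows "measure_pmf.prob (Pi_pmf J dflt (\<lambda>_. pmf_of_set (unit_steps::(int^'d) set))) {f. (\<Sum>t\<in>J. f t) = x}
     \<le> real CARD('d) * exp (- (real (card J) / (2 * real CARD('d)^2)))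
        + (real (card J) / (2 * real CARD('d))) powr (- (real CARD('d) / 2))"
proof -
  define \<tau> where "\<tau> = real (card J) / (2 * real CARD('d))"
  have tau: "\<tau> > 0" using assms by (simp add: \<tau>_def)
  let ?E = "{f. (\<Sum>t\<in>J. f t) = x}"
  let ?K = "Pi_pmf J undefined (\<lambda>_. pmf_of_set (UNIV::'d set))"
  let ?Q = "\<lambda>kk. Pi_pmf J dflt (\<lambda>t. map_pmf (axis_vec (kk t)) rademacher)"
  let ?B = "{kk. \<exists>i. real (card {t\<in>J. kk t = i}) < \<tau>}"
  let ?c = "\<tau> powr (- (real CARD('d) / 2))"
  have "Pi_pmf J dflt (\<lambda>_. pmf_of_set (unit_steps::(int^'d) set)) = bind_pmf ?K ?Q"
    unfolding pmf_of_set_unit_steps_eq_bind by (rule Pi_pmf_bind[OF assms(1)])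
  then have "measure_pmf.prob (Pi_pmf J dflt (\<lambda>_. pmf_of_set (unit_steps::(int^'d) set))) ?E
      = measure (measure_pmf ?K \<bind> (\<lambda>kk. measure_pmf (?Q kk))) ?E"
    by (simp add: measure_pmf_bind)
  also have "\<dots> = measure_pmf.expectation ?K (\<lambda>kk. measure_pmf.prob (?Q kk) ?E)"
    by (rule measure_pmf.measure_bind[where N = "count_space UNIV"])
      (auto simp: measurable_pmf_measure1 space_subprob_algebra
        intro: prob_space_imp_subprob_space measure_pmf.prob_space_axioms)
  also have "\<dots> \<le> measure_pmf.expectation ?K (\<lambda>kk. indicator ?B kk + ?c)"
  proof (rule integral_mono)
    show "integrable (measure_pmf ?K) (\<lambda>kk. measure_pmf.prob (?Q kk) ?E)"
      by (rule measure_pmf.integrable_const_bound[where B = 1]) (auto simp: measurable_pmf_measure1)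
    show "integrable (measure_pmf ?K) (\<lambda>kk. indicator ?B kk + ?c)"
      by (rule measure_pmf.integrable_const_bound[where B = "1 + ?c"])
         (auto simp: measurable_pmf_measure1 indicator_def)
    fix kk :: "'i \<Rightarrow> 'd"
    have "measure_pmf.prob (?Q kk) ?E \<le> (\<Prod>i\<in>UNIV. peak_bound (card {t\<in>J. kk t = i}))"
      by (rule prob_axis_sum_eq_le[OF assms(1)])
    also have "\<dots> \<le> indicator ?B kk + ?c" by (rule prod_peak_bound_le[OF tau])
    finally show "measure_pmf.prob (?Q kk) ?E \<le> indicator ?B kk + ?c" .
  qed
  also have "\<dots> = measure_pmf.prob ?K ?B + ?c"
    by (subst Bochner_Integration.integral_add) (auto simp: measurable_pmf_measure1 intro!: measure_pmf.integrable_const_bound[where B = 1])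
  also have "measure_pmf.prob ?K ?B \<le> real CARD('d) * exp (- (real (card J) / (2 * real CARD('d)^2)))"
    unfolding \<tau>_def by (rule prob_some_axis_count_small_le[OF assms])
  finally show ?thesis by (simp add: \<tau>_def)
qed

definition lclt_const :: "nat \<Rightarrow> real" where
  "lclt_const d = real d * (2 * real d ^ 3) ^ d + (2 * real d) powr (real d / 2)"

lemma lclt_const_pos: "d > 0 \<Longrightarrow> lclt_const d > 0"
  by (auto simp: lclt_const_def intro!: add_pos_pos)

lemma exp_neg_le_powr:
  fixes n d :: nat
  assumes "n > 0" "d > 0"
  shows "exp (- (real n / (2 * real d^2))) \<le> (2 * real d ^ 3) ^ d * real n powr (- (real d / 2))"
proof -
  let ?x = "real n / (2 * real d^2)"
  have x0: "?x \<ge> 0" by simp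
  have "(1 + ?x / real d) ^ d \<le> exp ?x"
  proof (rule exp_ge_one_plus_x_over_n_power_n)
    show "- real d \<le> ?x" using x0 by linarith
    show "0 < d" using assms by simp
  qed
  moreover have "(?x / real d) ^ d \<le> (1 + ?x / real d) ^ d"
    by (rule power_mono) (use x0 assms in auto)
  ultimately have ex: "(?x / real d) ^ d \<le> exp ?x" by linarith
  have xd: "?x / real d = real n / (2 * real d ^ 3)"
    using assms by (simp add: field_simps power2_eq_square power3_eq_cube)
  have pos: "(real n / (2 * real d ^ 3)) ^ d > 0" using assms by simp
  have "exp (- ?x) = 1 / exp ?x" by (simp add: exp_minus field_simps)
  also have "\<dots> \<le> 1 / (real n / (2 * real d ^ 3)) ^ d"
    using ex[unfolded xd] pos by (intro divide_left_mono) auto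
  also have "\<dots> = (2 * real d ^ 3) ^ d * (1 / real n ^ d)"
    by (simp add: power_divide field_simps)
  also have "1 / real n ^ d \<le> real n powr (- (real d / 2))"
  proof -
    have "real n powr (real d / 2) \<le> real n powr real d"
      using assms by (intro powr_mono) auto
    also have "\<dots> = real n ^ d" using assms by (simp add: powr_realpow)
    finally have "real n powr (real d / 2) \<le> real n ^ d" .
    then have "1 / real n ^ d \<le> 1 / real n powr (real d / 2)"
      using assms by (intro divide_left_mono) auto
    then show ?thesis using assms by (simp add: powr_minus_divide)
  qed
  then have "(2 * real d ^ 3) ^ d * (1 / real n ^ d) \<le> (2 * real d ^ 3) ^ d * real n powr (- (real d / 2))"
    by (intro mult_left_mono) auto
  finally show ?thesis .
qed

lemma prob_unit_sum_eq_le: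
  fixes J :: "'i set" and x :: "int^'d"
  assumes "finite J" "card J > 0"
  shows "measure_pmf.prob (Pi_pmf J dflt (\<lambda>_. pmf_of_set (unit_steps::(int^'d) set))) {f. (\<Sum>t\<in>J. f t) = x}
     \<le> lclt_const CARD('d) * real (card J) powr (- (real CARD('d) / 2))"
proof -
  let ?n = "card J" and ?d = "CARD('d)"
  have d0: "?d > 0" by simp
  have a: "real ?d * exp (- (real ?n / (2 * real ?d^2))) \<le> real ?d * ((2 * real ?d ^ 3) ^ ?d * real ?n powr (- (real ?d / 2)))"
    by (intro mult_left_mono exp_neg_le_powr) (use assms d0 in auto)
  have b: "(real ?n / (2 * real ?d)) powr (- (real ?d / 2)) = (2 * real ?d) powr (real ?d / 2) * real ?n powr (- (real ?d / 2))"
    using assms by (simp add: powr_divide powr_minus field_simps)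
  have "measure_pmf.prob (Pi_pmf J dflt (\<lambda>_. pmf_of_set (unit_steps::(int^'d) set))) {f. (\<Sum>t\<in>J. f t) = x}
     \<le> real ?d * exp (- (real ?n / (2 * real ?d^2))) + (real ?n / (2 * real ?d)) powr (- (real ?d / 2))"
    by (rule prob_unit_sum_eq_le_exp[OF assms])
  also have "\<dots> \<le> lclt_const ?d * real ?n powr (- (real ?d / 2))"
    using a b by (simp add: lclt_const_def algebra_simps)
  finally show ?thesis .
qed

lemma set_Pi_pmf_unit_steps:
  assumes "finite J" "f \<in> set_pmf (Pi_pmf J d (\<lambda>_. pmf_of_set (unit_steps::(int^'d) set)))" "t \<in> J"
  shows "f t \<in> unit_steps"
  using assms by (auto simp: set_Pi_pmf PiE_dflt_def)

lemma prob_unit_sum_eq_unreachable: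
  fixes J :: "'i set" and y :: "int^'d"
  assumes "finite J" "int (card J) < \<bar>y $ k\<bar>"
  shows "measure_pmf.prob (Pi_pmf J d (\<lambda>_. pmf_of_set (unit_steps::(int^'d) set))) {f. (\<Sum>t\<in>J. f t) = y} = 0"
proof -
  have "f \<notin> {f. (\<Sum>t\<in>J. f t) = y}" if f: "f \<in> set_pmf (Pi_pmf J d (\<lambda>_. pmf_of_set (unit_steps::(int^'d) set)))" for f
  proof
    assume "f \<in> {f. (\<Sum>t\<in>J. f t) = y}"
    then have "y $ k = (\<Sum>t\<in>J. f t $ k)" by (auto simp: sum_component)
    then have "\<bar>y $ k\<bar> \<le> (\<Sum>t\<in>J. \<bar>f t $ k\<bar>)" by (simp add: sum_abs)
    also have "\<dots> \<le> (\<Sum>t\<in>J. 1)"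
      by (rule sum_mono) (use abs_unit_step_nth_le set_Pi_pmf_unit_steps[OF assms(1) f] in blast)
    finally show False using assms by simp
  qed
  then show ?thesis by (subst measure_pmf_zero_iff) blast
qed

lemma prob_Pi_pmf_const_steps:
  fixes S :: "'i set" and u :: "int^'d"
  assumes "finite S" "u \<in> unit_steps"
  shows "measure_pmf.prob (Pi_pmf S d (\<lambda>_. pmf_of_set (unit_steps::(int^'d) set))) {f. \<forall>t\<in>S. f t = u}
       = (1 / (2 * real CARD('d))) ^ card S"
proof -
  have "{f. \<forall>t\<in>S. f t = u} = Pi S (\<lambda>_. {u})" by (auto simp: Pi_def)
  then have "measure_pmf.prob (Pi_pmf S d (\<lambda>_. pmf_of_set (unit_steps::(int^'d) set))) {f. \<forall>t\<in>S. f t = u}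
      = (\<Prod>t\<in>S. measure_pmf.prob (pmf_of_set (unit_steps::(int^'d) set)) {u})"
    using measure_Pi_pmf_Pi[OF assms(1), of d "\<lambda>_. pmf_of_set (unit_steps::(int^'d) set)" "\<lambda>_. {u}"] by simp
  also have "\<dots> = (\<Prod>t\<in>S. 1 / (2 * real CARD('d)))"
    using assms by (simp add: measure_pmf_of_set card_unit_steps)
  finally show ?thesis by simp
qed

section \<open>Increments of the two-sided walk\<close>

definition increment :: "(nat \<Rightarrow> int^'d) \<times> (nat \<Rightarrow> int^'d) \<Rightarrow> int \<Rightarrow> int^'d" where
  "increment \<omega> t = (if t \<ge> 1 then fst \<omega> (nat (t - 1)) else - snd \<omega> (nat (- t)))"

lemma two_sided_increment: "two_sided \<omega> t - two_sided \<omega> (t - 1) = increment \<omega> t"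
proof (cases "t \<ge> 1")
  case True
  then have "nat t = Suc (nat (t - 1))" by simp
  with True show ?thesis by (simp add: two_sided_def increment_def walk_def)
next
  case False
  then consider "t = 0" | "t < 0" by linarith
  then show ?thesis
  proof cases
    case 2
    then have "nat (- (t - 1)) = Suc (nat (- t))" by simp
    with 2 show ?thesis by (simp add: two_sided_def increment_def walk_def)
  qed (simp add: two_sided_def increment_def walk_def)
qed

lemma two_sided_diff_eq_sum:
  assumes "a \<le> b"
  shows "two_sided \<omega> b - two_sided \<omega> a = (\<Sum>t\<in>{a<..b}. increment \<omega> t)"
proof -
  have "two_sided \<omega> (a + int n) - two_sided \<omega> a = (\<Sum>t\<in>{a<..a + int n}. increment \<omega> t)" for n
  proof (induction n)
    case (Suc n)
    have "{a<..a + int (Suc n)} = insert (a + int n + 1) {a<..a + int n}" by auto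
    moreover have "two_sided \<omega> (a + int n + 1) - two_sided \<omega> (a + int n) = increment \<omega> (a + int n + 1)"
      using two_sided_increment[of \<omega> "a + int n + 1"] by simp
    ultimately show ?case
      using Suc.IH by (simp add: algebra_simps)
  qed simp
  from this[of "nat (b - a)"] assms show ?thesis by simp
qed

lemma cut_time_iff:
  "(two_sided \<omega> ` {.. j} \<inter> two_sided \<omega> ` {j + 1 ..} = {}) \<longleftrightarrow>
   (\<forall>a b. a \<le> j \<longrightarrow> j < b \<longrightarrow> (\<Sum>t\<in>{a<..b}. increment \<omega> t) \<noteq> 0)"
proof -
  have eqv: "two_sided \<omega> a = two_sided \<omega> b \<longleftrightarrow> (\<Sum>t\<in>{a<..b}. increment \<omega> t) = 0" if "a \<le> b" for a b
    using two_sided_diff_eq_sum[OF that, of \<omega>] by (metis eq_iff_diff_eq_0)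
  show ?thesis
  proof
    assume d: "two_sided \<omega> ` {.. j} \<inter> two_sided \<omega> ` {j + 1 ..} = {}"
    show "\<forall>a b. a \<le> j \<longrightarrow> j < b \<longrightarrow> (\<Sum>t\<in>{a<..b}. increment \<omega> t) \<noteq> 0"
    proof (intro allI impI notI)
      fix a b assume ab: "a \<le> j" "j < b" "(\<Sum>t\<in>{a<..b}. increment \<omega> t) = 0"
      have "a \<le> b" using ab by simp
      then have "two_sided \<omega> a = two_sided \<omega> b" using eqv[of a b] ab by simp
      moreover have "two_sided \<omega> a \<in> two_sided \<omega> ` {.. j}" using ab by simp
      moreover have "two_sided \<omega> b \<in> two_sided \<omega> ` {j + 1 ..}" using ab by simp
      ultimately show False using d by auto
    qed
  next
    assume h: "\<forall>a b. a \<le> j \<longrightarrow> j < b \<longrightarrow> (\<Sum>t\<in>{a<..b}. increment \<omega> t) \<noteq> 0"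
    show "two_sided \<omega> ` {.. j} \<inter> two_sided \<omega> ` {j + 1 ..} = {}"
    proof (rule ccontr)
      assume "two_sided \<omega> ` {.. j} \<inter> two_sided \<omega> ` {j + 1 ..} \<noteq> {}"
      then obtain a b where ab: "a \<le> j" "b \<ge> j + 1" "two_sided \<omega> a = two_sided \<omega> b" by auto
      have "a \<le> b" using ab by simp
      then have "(\<Sum>t\<in>{a<..b}. increment \<omega> t) = 0" using eqv[of a b] ab by simp
      then show False using h ab by auto
    qed
  qed
qed

lemma space_srw_step [simp]: "space (srw_step :: (int^'d) measure) = UNIV"
  by (simp add: srw_step_def)

lemma sets_srw_step [simp]: "sets (srw_step :: (int^'d) measure) = UNIV"
  by (simp add: srw_step_def)

lemma prob_space_srw_step: "prob_space (srw_step :: (int^'d) measure)"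
  by (simp add: srw_step_def measure_pmf.prob_space_axioms)

lemma prob_space_step_space: "prob_space (step_space :: (nat \<Rightarrow> int^'d) measure)"
  unfolding step_space_def by (rule prob_space_PiM) (rule prob_space_srw_step)

lemma space_step_space [simp]: "space (step_space :: (nat \<Rightarrow> int^'d) measure) = UNIV"
  by (simp add: step_space_def space_PiM PiE_UNIV_domain)

lemma prob_space_two_walk_space: "prob_space (two_walk_space :: ((nat \<Rightarrow> int^'d) \<times> (nat \<Rightarrow> int^'d)) measure)"
  unfolding two_walk_space_def by (rule prob_space_pair[OF prob_space_step_space prob_space_step_space])

lemma space_two_walk_space [simp]:
  "space (two_walk_space :: ((nat \<Rightarrow> int^'d) \<times> (nat \<Rightarrow> int^'d)) measure) = UNIV"
  by (simp add: two_walk_space_def space_pair_measure)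

lemma measurable_step_space_component:
  "(\<lambda>\<omega>. \<omega> i) \<in> (step_space :: (nat \<Rightarrow> int^'d) measure) \<rightarrow>\<^sub>M count_space UNIV"
proof -
  have "(\<lambda>\<omega>. \<omega> i) \<in> (step_space :: (nat \<Rightarrow> int^'d) measure) \<rightarrow>\<^sub>M srw_step"
    unfolding step_space_def by (rule measurable_component_singleton) simp
  moreover have "(step_space :: (nat \<Rightarrow> int^'d) measure) \<rightarrow>\<^sub>M (srw_step :: (int^'d) measure) =
      step_space \<rightarrow>\<^sub>M count_space UNIV"
    by (rule measurable_cong_sets) auto
  ultimately show ?thesis by simp
qed

lemma measurable_increment:
  "(\<lambda>\<omega>. increment \<omega> t) \<in> (two_walk_space :: ((nat \<Rightarrow> int^'d) \<times> (nat \<Rightarrow> int^'d)) measure) \<rightarrow>\<^sub>M count_space UNIV"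
proof (cases "t \<ge> 1")
  case True
  then have eq: "(\<lambda>\<omega>. increment \<omega> t) = (\<lambda>\<omega>1. \<omega>1 (nat (t - 1))) \<circ> fst"
    by (auto simp: increment_def fun_eq_iff)
  show ?thesis unfolding eq two_walk_space_def
    by (rule measurable_comp[OF measurable_fst measurable_step_space_component])
next
  case False
  then have eq: "(\<lambda>\<omega>. increment \<omega> t) = uminus \<circ> ((\<lambda>\<omega>1. \<omega>1 (nat (- t))) \<circ> snd)"
    by (auto simp: increment_def fun_eq_iff)
  show ?thesis unfolding eq two_walk_space_def
    by (rule measurable_comp[OF measurable_comp[OF measurable_snd measurable_step_space_component]])
       (simp add: measurable_count_space_eq1)
qed

lemma sets_increment_cylinder:
  assumes "finite J"
  shows "{\<omega> \<in> space two_walk_space. \<forall>t\<in>J. increment \<omega> t = a t}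
           \<in> sets (two_walk_space :: ((nat \<Rightarrow> int^'d) \<times> (nat \<Rightarrow> int^'d)) measure)"
proof (rule sets.sets_Collect_finite_All[OF _ assms])
  fix t
  have "{\<omega> \<in> space two_walk_space. increment \<omega> t = a t} =
      (\<lambda>\<omega>. increment \<omega> t) -` {a t} \<inter> space (two_walk_space :: ((nat \<Rightarrow> int^'d) \<times> (nat \<Rightarrow> int^'d)) measure)"
    by auto
  also have "\<dots> \<in> sets two_walk_space"
    by (rule measurable_sets[OF measurable_increment]) simp
  finally show "{\<omega> \<in> space two_walk_space. increment \<omega> t = a t}
      \<in> sets (two_walk_space :: ((nat \<Rightarrow> int^'d) \<times> (nat \<Rightarrow> int^'d)) measure)" .
qed

lemma step_space_cylinder_eq_prod_emb:
  "{\<omega>. \<forall>i\<in>I. \<omega> i = b i} = prod_emb UNIV (\<lambda>_. srw_step :: (int^'d) measure) I (\<Pi>\<^sub>E i\<in>I. {b i})"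
  by (auto simp: prod_emb_def PiE_def extensional_def Pi_iff)

lemma sets_step_space_cylinder:
  "finite I \<Longrightarrow> {\<omega>. \<forall>i\<in>I. \<omega> i = b i} \<in> sets (step_space :: (nat \<Rightarrow> int^'d) measure)"
  unfolding step_space_cylinder_eq_prod_emb step_space_def by (rule sets_PiM_I) auto

lemma emeasure_step_space_cylinder:
  fixes b :: "nat \<Rightarrow> int^'d"
  assumes "finite I" "\<forall>i\<in>I. b i \<in> unit_steps"
  shows "emeasure step_space {\<omega>. \<forall>i\<in>I. \<omega> i = b i} = ennreal ((1 / (2 * real CARD('d))) ^ card I)"
proof -
  have "emeasure step_space {\<omega>. \<forall>i\<in>I. \<omega> i = b i} = (\<Prod>i\<in>I. emeasure (srw_step :: (int^'d) measure) {b i})"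
    unfolding step_space_cylinder_eq_prod_emb step_space_def
    by (simp add: emeasure_PiM_emb prob_space_srw_step assms)
  also have "\<dots> = (\<Prod>i\<in>I. ennreal (1 / (2 * real CARD('d))))"
    using assms unfolding srw_step_def
    by (intro prod.cong refl) (simp add: emeasure_pmf_of_set card_unit_steps)
  finally show ?thesis
    by (simp add: prod_ennreal ennreal_power)
qed

lemma Ball_int_split:
  "(\<forall>t\<in>J. P t) \<longleftrightarrow> (\<forall>i. int i + 1 \<in> J \<longrightarrow> P (int i + 1)) \<and> (\<forall>i. - int i \<in> J \<longrightarrow> P (- int i))"
proof (intro iffI ballI)
  fix t
  assume h: "(\<forall>i. int i + 1 \<in> J \<longrightarrow> P (int i + 1)) \<and> (\<forall>i. - int i \<in> J \<longrightarrow> P (- int i))"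
    and t: "t \<in> J"
  show "P t"
  proof (cases "t \<ge> 1")
    case True
    then have "int (nat (t - 1)) + 1 = t" by simp
    then show ?thesis using h t by metis
  next
    case False
    then have "- int (nat (- t)) = t" by simp
    then show ?thesis using h t by metis
  qed
qed simp

lemma increment_cylinder_eq_Times:
  "{\<omega>. \<forall>t\<in>J. increment \<omega> t = a t} =
   {f. \<forall>i\<in>(\<lambda>i. int i + 1) -` J. f i = a (int i + 1)} \<times> {g. \<forall>i\<in>(\<lambda>i. - int i) -` J. g i = - a (- int i)}"
  by (auto simp: Ball_int_split[where J = J] increment_def) (metis minus_minus)

lemma card_int_split:
  assumes "finite J"
  shows "card J = card ((\<lambda>i::nat. int i + 1) -` J) + card ((\<lambda>i::nat. - int i) -` J)"
proof -
  let ?I1 = "(\<lambda>i::nat. int i + 1) -` J" and ?I2 = "(\<lambda>i::nat. - int i) -` J"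
  have "J = (\<lambda>i::nat. int i + 1) ` ?I1 \<union> (\<lambda>i::nat. - int i) ` ?I2"
  proof (intro set_eqI iffI)
    fix t assume t: "t \<in> J"
    show "t \<in> (\<lambda>i::nat. int i + 1) ` ?I1 \<union> (\<lambda>i::nat. - int i) ` ?I2"
    proof (cases "t \<ge> 1")
      case True
      then have "t = int (nat (t - 1)) + 1" "nat (t - 1) \<in> ?I1" using t by simp_all
      then show ?thesis by blast
    next
      case False
      then have "t = - int (nat (- t))" "nat (- t) \<in> ?I2" using t by simp_all
      then show ?thesis by blast
    qed
  qed auto
  moreover have "card ((\<lambda>i::nat. int i + 1) ` ?I1 \<union> (\<lambda>i::nat. - int i) ` ?I2) = card ?I1 + card ?I2"
  proof (subst card_Un_disjoint)
    show "card ((\<lambda>i::nat. int i + 1) ` ?I1) + card ((\<lambda>i::nat. - int i) ` ?I2) = card ?I1 + card ?I2"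
      by (subst card_image, simp add: inj_on_def)+ simp
  qed (use assms in \<open>auto intro: finite_vimageI simp: inj_def\<close>)
  ultimately show ?thesis by simp
qed

lemma emeasure_increment_cylinder:
  fixes a :: "int \<Rightarrow> int^'d"
  assumes J: "finite J" and a: "\<forall>t\<in>J. a t \<in> unit_steps"
  shows "emeasure two_walk_space {\<omega>. \<forall>t\<in>J. increment \<omega> t = a t} = ennreal ((1 / (2 * real CARD('d))) ^ card J)"
proof -
  let ?c = "1 / (2 * real CARD('d))"
  let ?I1 = "(\<lambda>i::nat. int i + 1) -` J" and ?I2 = "(\<lambda>i::nat. - int i) -` J"
  let ?C1 = "{f. \<forall>i\<in>?I1. f i = a (int i + 1)}" and ?C2 = "{g. \<forall>i\<in>?I2. g i = - a (- int i)}"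
  have fin: "finite ?I1" "finite ?I2"
    using J by (auto intro: finite_vimageI simp: inj_def)
  have "- u \<in> unit_steps" if "u \<in> unit_steps" for u :: "int^'d"
    using that unfolding unit_steps_def by (auto simp: vec_eq_iff)
  then have "emeasure step_space ?C1 = ennreal (?c ^ card ?I1)" "emeasure step_space ?C2 = ennreal (?c ^ card ?I2)"
    using a fin by (auto intro!: emeasure_step_space_cylinder)
  moreover have "emeasure (step_space \<Otimes>\<^sub>M step_space) (?C1 \<times> ?C2) = emeasure step_space ?C1 * emeasure step_space ?C2"
    using prob_space_imp_sigma_finite[OF prob_space_step_space]
    by (rule sigma_finite_measure.emeasure_pair_measure_Times) (use fin in \<open>auto intro!: sets_step_space_cylinder\<close>)
  ultimately show ?thesis
    unfolding two_walk_space_def increment_cylinder_eq_Times card_int_split[OF J]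
    by (simp add: ennreal_mult'' power_add)
qed

lemma AE_increment_unit_step:
  "AE \<omega> in (two_walk_space :: ((nat \<Rightarrow> int^'d) \<times> (nat \<Rightarrow> int^'d)) measure). increment \<omega> t \<in> unit_steps"
proof -
  let ?M = "two_walk_space :: ((nat \<Rightarrow> int^'d) \<times> (nat \<Rightarrow> int^'d)) measure"
  interpret prob_space ?M by (rule prob_space_two_walk_space)
  have F: "(\<lambda>u. {\<omega>. \<forall>s\<in>{t}. increment \<omega> s = u}) ` unit_steps \<subseteq> sets ?M"
    using sets_increment_cylinder[of "{t}" "\<lambda>_. _"] by auto
  have dj: "disjoint_family_on (\<lambda>u. {\<omega>. \<forall>s\<in>{t}. increment \<omega> s = u}) unit_steps"
    by (auto simp: disjoint_family_on_def)
  have eq: "{\<omega> \<in> space ?M. increment \<omega> t \<in> unit_steps} = (\<Union>u\<in>unit_steps. {\<omega>. \<forall>s\<in>{t}. increment \<omega> s = u})"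
    by auto
  have "emeasure ?M {\<omega> \<in> space ?M. increment \<omega> t \<in> unit_steps}
      = (\<Sum>u\<in>unit_steps. emeasure ?M {\<omega>. \<forall>s\<in>{t}. increment \<omega> s = u})"
    unfolding eq by (rule sum_emeasure[OF F dj finite_unit_steps, symmetric])
  also have "\<dots> = (\<Sum>u\<in>(unit_steps::(int^'d) set). ennreal (1 / (2 * real CARD('d))))"
    by (rule sum.cong) (use emeasure_increment_cylinder[of "{t}" "\<lambda>_. _"] in auto)
  also have "\<dots> = ennreal (\<Sum>u\<in>(unit_steps::(int^'d) set). 1 / (2 * real CARD('d)))"
    by (rule sum_ennreal) simp
  also have "\<dots> = 1" by (simp add: card_unit_steps)
  finally have "emeasure ?M {\<omega> \<in> space ?M. increment \<omega> t \<in> unit_steps} = 1" .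
  then have "prob {\<omega> \<in> space ?M. increment \<omega> t \<in> unit_steps} = 1"
    by (simp add: emeasure_eq_measure)
  moreover have "{\<omega> \<in> space ?M. increment \<omega> t \<in> unit_steps} \<in> sets ?M"
    using F eq by (metis (no_types, lifting) image_subset_iff sets.countable_UN'' countable_finite finite_unit_steps)
  ultimately show ?thesis using prob_Collect_eq_1[of "\<lambda>\<omega>. increment \<omega> t \<in> unit_steps"] by simp
qed

lemma measurable_restrict_increment:
  assumes "finite J"
  shows "(\<lambda>\<omega>. restrict (increment \<omega>) J) \<in> (two_walk_space :: ((nat \<Rightarrow> int^'d) \<times> (nat \<Rightarrow> int^'d)) measure) \<rightarrow>\<^sub>M count_space UNIV"
proof (rule measurableI)
  let ?M = "two_walk_space :: ((nat \<Rightarrow> int^'d) \<times> (nat \<Rightarrow> int^'d)) measure"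
  let ?R = "\<lambda>\<omega>. restrict (increment \<omega>) J"
  fix A :: "(int \<Rightarrow> int^'d) set"
  have "?R -` {a} \<inter> space ?M = {\<omega> \<in> space ?M. \<forall>t\<in>J. increment \<omega> t = a t}"
    if "a \<in> PiE J (\<lambda>_. UNIV)" for a
    using that by (auto simp: PiE_def extensional_def fun_eq_iff)
  then have "?R -` A \<inter> space ?M = (\<Union>a\<in>A \<inter> PiE J (\<lambda>_. UNIV). {\<omega> \<in> space ?M. \<forall>t\<in>J. increment \<omega> t = a t})"
    by auto
  also have "\<dots> \<in> sets ?M"
    using assms sets_increment_cylinder[OF assms]
    by (intro sets.countable_UN'' countable_Int2 countable_PiE) auto
  finally show "?R -` A \<inter> space ?M \<in> sets ?M" .
qed simp

lemma distr_restrict_increment: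
  assumes J: "finite J"
  shows "distr two_walk_space (count_space UNIV) (\<lambda>\<omega>. restrict (increment \<omega>) J) =
         measure_pmf (Pi_pmf J undefined (\<lambda>_. pmf_of_set (unit_steps :: (int^'d) set)))"
    (is "distr ?M _ ?R = measure_pmf ?Q")
proof (rule measure_eqI_countable_AE[where \<Omega> = "PiE J (\<lambda>_. unit_steps)"])
  show "countable (PiE J (\<lambda>_. unit_steps :: (int^'d) set))"
    by (rule countable_finite) (simp add: finite_PiE J)
  have "set_pmf ?Q = PiE J (\<lambda>_. unit_steps)"
    using J by (auto simp: set_Pi_pmf PiE_dflt_def PiE_def extensional_def)
  then show "AE x in measure_pmf ?Q. x \<in> PiE J (\<lambda>_. unit_steps)"
    by (simp add: AE_measure_pmf_iff)
  have "AE \<omega> in ?M. \<forall>t\<in>J. increment \<omega> t \<in> unit_steps"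
    by (rule AE_finite_allI[OF J]) (rule AE_increment_unit_step)
  then have "AE \<omega> in ?M. ?R \<omega> \<in> PiE J (\<lambda>_. unit_steps)"
    by eventually_elim auto
  then show "AE x in distr ?M (count_space UNIV) ?R. x \<in> PiE J (\<lambda>_. unit_steps)"
    by (subst AE_distr_iff[OF measurable_restrict_increment[OF J]]) auto
next
  fix a assume a: "a \<in> PiE J (\<lambda>_. unit_steps :: (int^'d) set)"
  then have "?R -` {a} \<inter> space ?M = {\<omega>. \<forall>t\<in>J. increment \<omega> t = a t}"
    by (auto simp: PiE_def extensional_def fun_eq_iff)
  then have "emeasure (distr ?M (count_space UNIV) ?R) {a} = emeasure ?M {\<omega>. \<forall>t\<in>J. increment \<omega> t = a t}"
    by (simp add: emeasure_distr[OF measurable_restrict_increment[OF J]])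
  also have "\<dots> = ennreal ((1 / (2 * real CARD('d))) ^ card J)"
    using a by (intro emeasure_increment_cylinder[OF J]) auto
  also have "\<dots> = ennreal (pmf ?Q a)"
  proof -
    have "pmf ?Q a = (\<Prod>t\<in>J. pmf (pmf_of_set (unit_steps :: (int^'d) set)) (a t))"
      by (rule pmf_Pi') (use J a in \<open>auto simp: PiE_def extensional_def\<close>)
    also have "\<dots> = (\<Prod>t\<in>J. 1 / (2 * real CARD('d)))"
      by (rule prod.cong) (use a in \<open>auto simp: card_unit_steps dest: PiE_mem\<close>)
    finally show ?thesis by simp
  qed
  finally show "emeasure (distr ?M (count_space UNIV) ?R) {a} = emeasure (measure_pmf ?Q) {a}"
    by (simp add: emeasure_pmf_single)
qed simp_all

lemma increment_event_eq_vimage: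
  assumes "determined_by J P"
  shows "{\<omega> \<in> space two_walk_space. P (increment \<omega>)} =
         (\<lambda>\<omega>. restrict (increment \<omega>) J) -` {f. P f} \<inter> space two_walk_space"
  using determined_byD[OF assms, of "restrict _ J"] by auto

lemma sets_increment_event:
  assumes "finite J" "determined_by J P"
  shows "{\<omega> \<in> space two_walk_space. P (increment \<omega>)} \<in> sets (two_walk_space :: ((nat \<Rightarrow> int^'d) \<times> (nat \<Rightarrow> int^'d)) measure)"
  unfolding increment_event_eq_vimage[OF assms(2)]
  by (rule measurable_sets[OF measurable_restrict_increment[OF assms(1)]]) simp

lemma measure_increment_event:
  assumes "finite J" "determined_by J P"
  shows "measure (two_walk_space :: ((nat \<Rightarrow> int^'d) \<times> (nat \<Rightarrow> int^'d)) measure) {\<omega> \<in> space two_walk_space. P (increment \<omega>)}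
         = measure_pmf.prob (Pi_pmf J undefined (\<lambda>_. pmf_of_set unit_steps)) {f. P f}"
proof -
  have "measure two_walk_space ((\<lambda>\<omega>. restrict (increment \<omega>) J) -` {f. P f} \<inter> space two_walk_space) =
      measure (distr two_walk_space (count_space UNIV) (\<lambda>\<omega>. restrict (increment \<omega>) J)) {f. P f}"
    by (rule measure_distr[OF measurable_restrict_increment[OF assms(1)], symmetric]) simp
  then show ?thesis
    unfolding increment_event_eq_vimage[OF assms(2)] by (simp add: distr_restrict_increment[OF assms(1)])
qed

lemma sum_straddling_pairs_le:
  fixes g :: "nat \<Rightarrow> real" and j :: int and m :: nat
  assumes g: "\<And>l. g l \<ge> 0"
  shows "(\<Sum>a\<in>{j - int m..j}. \<Sum>b\<in>{j+1..j + int m}. g (nat (b - a))) \<le> (\<Sum>l\<in>{1..2*m}. real l * g l)"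
proof -
  let ?A = "{j - int m..j}" and ?B = "{j+1..j + int m}"
  let ?\<psi> = "\<lambda>(a::int, b::int). (nat (b - a), nat (j - a))"
  let ?S = "Sigma {1..2*m} (\<lambda>l. {..<l})"
  have inj: "inj_on ?\<psi> (?A \<times> ?B)"
  proof (rule inj_onI)
    fix p q assume h: "p \<in> ?A \<times> ?B" "q \<in> ?A \<times> ?B" "?\<psi> p = ?\<psi> q"
    then show "p = q" by (cases p, cases q) auto
  qed
  have sub: "?\<psi> ` (?A \<times> ?B) \<subseteq> ?S" by auto
  have "(\<Sum>a\<in>?A. \<Sum>b\<in>?B. g (nat (b - a))) = (\<Sum>p\<in>?A \<times> ?B. g (fst (?\<psi> p)))"
    by (simp add: sum.cartesian_product case_prod_beta)
  also have "\<dots> = (\<Sum>q\<in>?\<psi> ` (?A \<times> ?B). g (fst q))"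
    by (rule sum.reindex[OF inj, symmetric, unfolded comp_def])
  also have "\<dots> \<le> (\<Sum>q\<in>?S. g (fst q))"
    by (rule sum_mono2) (use sub g in auto)
  also have "\<dots> = (\<Sum>(l,i)\<in>?S. g l)" by (simp add: case_prod_beta)
  also have "\<dots> = (\<Sum>l\<in>{1..2*m}. \<Sum>i\<in>{..<l}. g l)"
    by (rule sum.Sigma[symmetric]) auto
  also have "\<dots> = (\<Sum>l\<in>{1..2*m}. real l * g l)" by simp
  finally show ?thesis .
qed

lemma powr_neg_le_diff:
  fixes s :: real and l :: nat
  assumes "s > 1" "l \<ge> 2"
  shows "real l powr (- s) \<le> (real (l - 1) powr (1 - s) - real l powr (1 - s)) / (s - 1)"
proof -
  let ?f = "\<lambda>x::real. x powr (1 - s)"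
  have a: "real (l - 1) < real l" "real (l - 1) > 0" using assms by auto
  have "\<exists>z>real (l - 1). z < real l \<and> ?f (real l) - ?f (real (l - 1)) = (real l - real (l - 1)) * ((1 - s) * z powr (1 - s - 1))"
  proof (rule MVT2[OF a(1), of ?f "\<lambda>x. (1 - s) * x powr (1 - s - 1)"])
    fix x assume "real (l - 1) \<le> x" "x \<le> real l"
    then have "x > 0" using a by linarith
    then show "(?f has_real_derivative (1 - s) * x powr (1 - s - 1)) (at x)"
      by (rule has_real_derivative_powr)
  qed
  then obtain z where z: "z > real (l - 1)" "z < real l"
    and eq: "?f (real l) - ?f (real (l - 1)) = (real l - real (l - 1)) * ((1 - s) * z powr (1 - s - 1))"
    by blast
  have l1: "real l - real (l - 1) = 1" using assms by simp
  have zpos: "z > 0" using z a by linarith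
  have "real l powr (- s) \<le> z powr (- s)"
    by (intro powr_mono2') (use zpos z assms in auto)
  also have "z powr (- s) = (?f (real (l - 1)) - ?f (real l)) / (s - 1)"
    using eq l1 assms by (simp add: field_simps)
  finally show ?thesis .
qed

lemma sum_powr_neg_tail_le:
  fixes s :: real and L M :: nat
  assumes "s > 1" "L \<ge> 1"
  shows "(\<Sum>l\<in>{L+1..M}. real l powr (- s)) \<le> real L powr (1 - s) / (s - 1)"
proof (cases "M \<ge> L")
  case True
  have "(\<Sum>l\<in>{L+1..M}. real l powr (- s)) \<le> (real L powr (1 - s) - real M powr (1 - s)) / (s - 1)"
    using True
  proof (induction M rule: dec_induct)
    case base
    then show ?case by simp
  next
    case (step M)
    have "{L+1..Suc M} = insert (Suc M) {L+1..M}" using step by auto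
    then have "(\<Sum>l\<in>{L+1..Suc M}. real l powr (- s)) = real (Suc M) powr (- s) + (\<Sum>l\<in>{L+1..M}. real l powr (- s))"
      by simp
    also have "\<dots> \<le> (real M powr (1 - s) - real (Suc M) powr (1 - s)) / (s - 1) +
                    (real L powr (1 - s) - real M powr (1 - s)) / (s - 1)"
      using powr_neg_le_diff[OF assms(1), of "Suc M"] step assms by (intro add_mono) auto
    also have "\<dots> = (real L powr (1 - s) - real (Suc M) powr (1 - s)) / (s - 1)"
      by (simp add: add_divide_distrib[symmetric])
    finally show ?case .
  qed
  also have "\<dots> \<le> real L powr (1 - s) / (s - 1)"
    using assms by (intro divide_right_mono) auto
  finally show ?thesis .
next
  case False
  then have "{L+1..M} = {}" by auto
  then show ?thesis using assms by simp
qed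

lemma sum_weighted_tail_le:
  fixes s K :: real and m R :: nat
  assumes s: "s > 2" and m: "m \<ge> 1" and K: "K \<ge> 0"
  shows "(\<Sum>l\<in>{1..R}. real l * (if m < l then K * real l powr (- s) else 0))
         \<le> K * (real m powr (2 - s) / (s - 2))"
proof -
  have "(\<Sum>l\<in>{1..R}. real l * (if m < l then K * real l powr (- s) else 0))
      = (\<Sum>l\<in>{1..R}. if m < l then K * real l powr (- (s - 1)) else 0)"
  proof (rule sum.cong)
    fix l assume "l \<in> {1..R}"
    then have "real l * real l powr (- s) = real l powr (- (s - 1))"
      using powr_mult_base[of "real l" "- s"] by simp
    then show "real l * (if m < l then K * real l powr (- s) else 0) =
        (if m < l then K * real l powr (- (s - 1)) else 0)"
      by (simp add: algebra_simps)
  qed simp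
  also have "\<dots> = K * (\<Sum>l\<in>{m + 1..R}. real l powr (- (s - 1)))"
    by (simp add: sum.inter_filter[symmetric] sum_distrib_left)
       (rule sum.cong; use m in auto)
  also have "\<dots> \<le> K * (real m powr (1 - (s - 1)) / ((s - 1) - 1))"
    using s m K by (intro mult_left_mono sum_powr_neg_tail_le) auto
  finally show ?thesis
    by (simp add: algebra_simps)
qed

section \<open>Local cut times\<close>

abbreviation steps_pmf :: "int set \<Rightarrow> (int \<Rightarrow> int^'d) pmf" where
  "steps_pmf J \<equiv> Pi_pmf J undefined (\<lambda>_. pmf_of_set unit_steps)"

definition closes_loop :: "int \<Rightarrow> int \<Rightarrow> (int \<Rightarrow> int^'d) \<Rightarrow> bool" where
  "closes_loop a b f \<longleftrightarrow> (\<Sum>t\<in>{a<..b}. f t) = 0"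

definition local_cut :: "nat \<Rightarrow> int \<Rightarrow> (int \<Rightarrow> int^'d) \<Rightarrow> bool" where
  "local_cut m j f \<longleftrightarrow> (\<forall>a\<in>{j - int m..j}. \<forall>b\<in>{j + 1..j + int m}. \<not> closes_loop a b f)"

lemma determined_by_closes_loop: "determined_by {a<..b} (closes_loop a b)"
  unfolding closes_loop_def by (rule determined_by_sum_eq)

lemma determined_by_local_cut: "determined_by {j - int m<..j + int m} (local_cut m j)"
proof (rule determined_byI)
  fix f g :: "int \<Rightarrow> int^'d"
  assume "\<And>x. x \<in> {j - int m<..j + int m} \<Longrightarrow> f x = g x"
  then have "closes_loop a b f = closes_loop a b g" if "a \<in> {j - int m..j}" "b \<in> {j + 1..j + int m}" for a b
    using that by (intro determined_byD[OF determined_by_closes_loop]) auto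
  then show "local_cut m j f = local_cut m j g"
    by (auto simp: local_cut_def)
qed

lemma sum_const_axis_vec:
  assumes "finite T" "\<forall>t\<in>T. f t = axis_vec k 1"
  shows "(\<Sum>t\<in>T. f t) = axis_vec k (int (card T))"
proof -
  have "(\<Sum>t\<in>T. f t) = (\<Sum>t\<in>T. axis_vec k 1)"
    using assms by (intro sum.cong) auto
  then show ?thesis
    by (simp add: vec_eq_iff sum_component of_nat_index)
qed

lemma prob_unit_sum_eq_axis_le:
  fixes F :: "int set" and k :: "'d::finite"
  assumes "finite F" "r \<ge> 1"
  shows "measure_pmf.prob (steps_pmf F) {f. (\<Sum>t\<in>F. f t) = axis_vec k (- int r)}
    \<le> (if r \<le> card F then lclt_const CARD('d) * 2 powr (real CARD('d) / 2) * real (r + card F) powr (- (real CARD('d) / 2)) else 0)"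
proof (cases "r \<le> card F")
  case True
  let ?s = "real CARD('d) / 2"
  have pos: "card F > 0" "real (r + card F) > 0"
    using True assms(2) by auto
  have "measure_pmf.prob (steps_pmf F) {f. (\<Sum>t\<in>F. f t) = axis_vec k (- int r)}
      \<le> lclt_const CARD('d) * real (card F) powr (- ?s)"
    using assms(1) pos(1) by (rule prob_unit_sum_eq_le)
  also have "real (card F) powr (- ?s) \<le> (real (r + card F) / 2) powr (- ?s)"
    using True pos by (intro powr_mono2') auto
  also have "(real (r + card F) / 2) powr (- ?s) = 2 powr ?s * real (r + card F) powr (- ?s)"
    using pos by (simp add: powr_divide powr_minus field_simps)
  finally show ?thesis
    using True lclt_const_pos[of "CARD('d)"] by (simp add: mult_left_mono mult.assoc)
next
  case False
  then have "measure_pmf.prob (steps_pmf F) {f. (\<Sum>t\<in>F. f t :: int^'d) = axis_vec k (- int r)} = 0"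
    using assms by (intro prob_unit_sum_eq_unreachable[where k = k]) auto
  then show ?thesis
    using False by simp
qed

lemma card_straddling_window:
  fixes a b j :: int
  assumes "a \<le> j" "j < b" "L \<ge> 1"
  defines "T \<equiv> {a<..b} \<inter> {j - int L<..j + int L}"
  shows "card T \<ge> 1" "nat (b - a) = card T + card ({a<..b} - T)"
    and "card T \<le> card ({a<..b} - T) \<Longrightarrow> L \<le> card T"
proof -
  show "card T \<ge> 1"
    using assms by (auto simp: T_def Suc_le_eq card_gt_0_iff intro!: exI[of _ "j + 1"])
  have "T \<subseteq> {a<..b}"
    by (auto simp: T_def)
  then show "nat (b - a) = card T + card ({a<..b} - T)"
    using card_Diff_subset[of T "{a<..b}"] card_mono[of "{a<..b}" T] by (simp add: finite_subset)
  assume "card T \<le> card ({a<..b} - T)"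
  with \<open>card T \<ge> 1\<close> obtain t where t: "t \<in> {a<..b}" "t \<notin> {j - int L<..j + int L}"
    by (metis T_def Diff_iff Int_iff card.empty ex_in_conv le_zero_eq not_one_le_zero)
  show "L \<le> card T"
  proof (cases "t \<le> j - int L")
    case True
    then have "{j - int L<..j + 1} \<subseteq> T" using t assms(1-3) by (auto simp: T_def)
    then have "card {j - int L<..j + 1} \<le> card T" by (intro card_mono) (auto simp: T_def)
    then show ?thesis by simp
  next
    case False
    then have "{j<..j + int L} \<subseteq> T" using t assms(1-3) by (auto simp: T_def)
    then have "card {j<..j + int L} \<le> card T" by (intro card_mono) (auto simp: T_def)
    then show ?thesis by simp
  qed
qed

lemma loop_through_straight_run:
  fixes f :: "int \<Rightarrow> int^'d::finite"
  assumes "finite I" "\<forall>t\<in>S. f t = axis_vec k 1" "(\<Sum>t\<in>I. f t) = 0"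
  shows "(\<Sum>t\<in>I - S. f t) = axis_vec k (- int (card (I \<inter> S)))"
proof -
  have "(\<Sum>t\<in>I. f t) = (\<Sum>t\<in>I \<inter> S. f t) + (\<Sum>t\<in>I - S. f t)"
    using assms(1) by (rule sum.Int_Diff)
  moreover have "(\<Sum>t\<in>I \<inter> S. f t) = axis_vec k (int (card (I \<inter> S)))"
    using assms(1,2) by (intro sum_const_axis_vec) auto
  ultimately show ?thesis
    using assms(3) by (simp add: vec_eq_iff add_eq_0_iff)
qed

lemma prob_straight_run_and_loop_le:
  fixes W :: "int set" and k :: "'d::finite" and L :: nat and j a b :: int
  assumes W: "finite W" and L: "L \<ge> 1" and SW: "{j - int L<..j + int L} \<subseteq> W" and abW: "{a<..b} \<subseteq> W"
    and ab: "a \<le> j" "j < b"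
  shows "measure_pmf.prob (steps_pmf W) {f. (\<forall>t\<in>{j - int L<..j + int L}. f t = axis_vec k 1) \<and> closes_loop a b f}
    \<le> (1 / (2 * real CARD('d))) ^ (2 * L) * (if 2 * L \<le> nat (b - a)
         then lclt_const CARD('d) * 2 powr (real CARD('d) / 2) * real (nat (b - a)) powr (- (real CARD('d) / 2)) else 0)"
proof -
  let ?S = "{j - int L<..j + int L}"
  let ?straight = "\<lambda>f::int \<Rightarrow> int^'d. \<forall>t\<in>?S. f t = axis_vec k 1"
  let ?K = "lclt_const CARD('d) * 2 powr (real CARD('d) / 2)"
  define T where "T = {a<..b} \<inter> ?S"
  define F where "F = {a<..b} - T"
  let ?rest = "\<lambda>f::int \<Rightarrow> int^'d. (\<Sum>t\<in>F. f t) = axis_vec k (- int (card T))"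
  note card_T = card_straddling_window[OF ab L, folded T_def F_def]
  have "F = {a<..b} - ?S"
    by (auto simp: F_def T_def)
  then have "?rest f" if "?straight f" "closes_loop a b f" for f
    using that unfolding T_def by (simp only:) (intro loop_through_straight_run; simp add: closes_loop_def)
  then have "{f. ?straight f \<and> closes_loop a b f} \<subseteq> {f. ?straight f \<and> ?rest f}"
    by blast
  then have "measure_pmf.prob (steps_pmf W) {f. ?straight f \<and> closes_loop a b f}
      \<le> measure_pmf.prob (steps_pmf (?S \<union> (W - ?S))) {f. ?straight f \<and> ?rest f}"
    using SW by (simp add: Un_absorb1 measure_pmf.finite_measure_mono)
  also have "\<dots> = measure_pmf.prob (steps_pmf ?S) {f. ?straight f} * measure_pmf.prob (steps_pmf (W - ?S)) {f. ?rest f}"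
    using W abW by (intro prob_Pi_pmf_Un_indep determined_by_mono[OF determined_by_sum_eq])
      (auto simp: F_def T_def intro: determined_byI)
  also have "measure_pmf.prob (steps_pmf (W - ?S)) {f. ?rest f} = measure_pmf.prob (steps_pmf F) {f. ?rest f}"
    using W abW by (intro prob_Pi_pmf_superset determined_by_sum_eq) (auto simp: F_def T_def)
  also have "measure_pmf.prob (steps_pmf ?S) {f. ?straight f} = (1 / (2 * real CARD('d))) ^ (2 * L)"
    using prob_Pi_pmf_const_steps[OF _ axis_vec_in_unit_steps[of 1 k], of ?S undefined]
    by (simp add: nat_mult_distrib)
  also have "measure_pmf.prob (steps_pmf F) {f. ?rest f}
      \<le> (if card T \<le> card F then ?K * real (card T + card F) powr (- (real CARD('d) / 2)) else 0)"
    using card_T(1) by (intro prob_unit_sum_eq_axis_le) (auto simp: F_def)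
  also have "\<dots> \<le> (if 2 * L \<le> nat (b - a) then ?K * real (nat (b - a)) powr (- (real CARD('d) / 2)) else 0)"
    using card_T(2,3) lclt_const_pos[of "CARD('d)"] by auto
  finally show ?thesis
    by (simp add: mult_left_mono)
qed

lemma prob_straight_run_and_straddling_loop_le:
  fixes j :: int and m L :: nat and k :: "'d::finite"
  assumes d5: "CARD('d) \<ge> 5" and L: "L \<ge> 1" and mL: "L \<le> m"
  shows "measure_pmf.prob (steps_pmf {j - int m<..j + int m})
      {f. (\<forall>t\<in>{j - int L<..j + int L}. f t = axis_vec k 1) \<and> (\<exists>a\<in>{j - int m..j}. \<exists>b\<in>{j + 1..j + int m}. closes_loop a b f)}
    \<le> (1 / (2 * real CARD('d))) ^ (2 * L) * (lclt_const CARD('d) * 2 powr (real CARD('d) / 2) *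
          (real (2 * L - 1) powr (2 - real CARD('d) / 2) / (real CARD('d) / 2 - 2)))"
proof -
  let ?d = "real CARD('d)"
  let ?K = "lclt_const CARD('d) * 2 powr (?d / 2)"
  let ?c = "(1 / (2 * ?d)) ^ (2 * L)"
  let ?Q = "steps_pmf {j - int m<..j + int m} :: (int \<Rightarrow> int^'d) pmf"
  let ?straight = "\<lambda>f::int \<Rightarrow> int^'d. \<forall>t\<in>{j - int L<..j + int L}. f t = axis_vec k 1"
  let ?P = "{j - int m..j} \<times> {j + 1..j + int m}"
  let ?w = "\<lambda>l. if 2 * L - 1 < l then ?K * real l powr (- (?d / 2)) else 0"
  have "{f. ?straight f \<and> (\<exists>a\<in>{j - int m..j}. \<exists>b\<in>{j + 1..j + int m}. closes_loop a b f)} =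
      (\<Union>p\<in>?P. {f. ?straight f \<and> closes_loop (fst p) (snd p) f})"
    by force
  then have "measure_pmf.prob ?Q {f. ?straight f \<and> (\<exists>a\<in>{j - int m..j}. \<exists>b\<in>{j + 1..j + int m}. closes_loop a b f)}
      \<le> (\<Sum>p\<in>?P. measure_pmf.prob ?Q {f. ?straight f \<and> closes_loop (fst p) (snd p) f})"
    by (simp only:) (rule measure_pmf.finite_measure_subadditive_finite; simp)
  also have "\<dots> \<le> (\<Sum>p\<in>?P. ?c * ?w (nat (snd p - fst p)))"
  proof (rule sum_mono)
    fix p assume "p \<in> ?P"
    then have "measure_pmf.prob ?Q {f. ?straight f \<and> closes_loop (fst p) (snd p) f}
        \<le> ?c * (if 2 * L \<le> nat (snd p - fst p) then ?K * real (nat (snd p - fst p)) powr (- (?d / 2)) else 0)"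
      using mL L by (intro prob_straight_run_and_loop_le) auto
    also have "\<dots> = ?c * ?w (nat (snd p - fst p))"
      using L by auto
    finally show "measure_pmf.prob ?Q {f. ?straight f \<and> closes_loop (fst p) (snd p) f} \<le> ?c * ?w (nat (snd p - fst p))" .
  qed
  also have "\<dots> = ?c * (\<Sum>a\<in>{j - int m..j}. \<Sum>b\<in>{j + 1..j + int m}. ?w (nat (b - a)))"
    by (simp add: sum.cartesian_product sum_distrib_left case_prod_beta)
  also have "\<dots> \<le> ?c * (\<Sum>l\<in>{1..2 * m}. real l * ?w l)"
    using lclt_const_pos[of "CARD('d)"] by (intro mult_left_mono sum_straddling_pairs_le) auto
  also have "\<dots> \<le> ?c * (?K * (real (2 * L - 1) powr (2 - ?d / 2) / (?d / 2 - 2)))"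
    using d5 L lclt_const_pos[of "CARD('d)"] by (intro mult_left_mono sum_weighted_tail_le) auto
  finally show ?thesis .
qed

text \<open>Forcing the \<open>2L\<close> steps around \<open>j\<close> to point in one direction rules out every loop through
  \<open>j\<close> shorter than \<open>2L\<close>; longer loops are unlikely by the local limit bound.\<close>

lemma prob_local_cut_ge:
  fixes j :: int and m L :: nat
  assumes d5: "CARD('d) \<ge> 5" and L: "L \<ge> 1" and mL: "L \<le> m"
  shows "measure_pmf.prob (steps_pmf {j - int m<..j + int m} :: (int \<Rightarrow> int^'d) pmf) {f. local_cut m j f}
     \<ge> (1 / (2 * real CARD('d))) ^ (2 * L) * (1 - lclt_const CARD('d) * 2 powr (real CARD('d) / 2) *
          (real (2 * L - 1) powr (2 - real CARD('d) / 2) / (real CARD('d) / 2 - 2)))"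
proof -
  let ?Q = "steps_pmf {j - int m<..j + int m} :: (int \<Rightarrow> int^'d) pmf"
  let ?S = "{j - int L<..j + int L}"
  let ?straight = "\<lambda>f::int \<Rightarrow> int^'d. \<forall>t\<in>?S. f t = axis_vec undefined 1"
  let ?bad = "{f. ?straight f \<and> (\<exists>a\<in>{j - int m..j}. \<exists>b\<in>{j + 1..j + int m}. closes_loop a b f)}"
  have "(1 / (2 * real CARD('d))) ^ (2 * L) = measure_pmf.prob (steps_pmf ?S :: (int \<Rightarrow> int^'d) pmf) {f. ?straight f}"
    using prob_Pi_pmf_const_steps[OF _ axis_vec_in_unit_steps[of 1 "undefined :: 'd"], of ?S undefined]
    by (simp add: nat_mult_distrib)
  also have "\<dots> = measure_pmf.prob ?Q {f. ?straight f}"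
    using mL by (intro prob_Pi_pmf_superset[symmetric] determined_byI) auto
  also have "\<dots> \<le> measure_pmf.prob ?Q ({f. local_cut m j f} \<union> ?bad)"
    by (rule measure_pmf.finite_measure_mono) (auto simp: local_cut_def)
  also have "\<dots> \<le> measure_pmf.prob ?Q {f. local_cut m j f} + measure_pmf.prob ?Q ?bad"
    by (rule measure_Un_le) simp_all
  finally show ?thesis
    using prob_straight_run_and_straddling_loop_le[OF d5 L mL, of j "undefined :: 'd"]
    by (simp add: algebra_simps)
qed

lemma exists_nat_powr_le_half:
  fixes K s :: real
  assumes K: "K > 0" and s: "s \<le> - 1 / 2"
  obtains L :: nat where "L \<ge> 1" "K * real (2 * L - 1) powr s \<le> 1 / 2"
proof -
  obtain L :: nat where L: "(2 * K)^2 + 1 < real L"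
    using reals_Archimedean2 by blast
  let ?x = "real (2 * L - 1)"
  have "(2 * K)^2 \<ge> 0" by simp
  then have L1: "L \<ge> 1" using L by linarith
  then have "?x = 2 * real L - 1" by (simp add: of_nat_diff)
  then have x: "?x \<ge> 1" "(2 * K)^2 < ?x"
    using L \<open>(2 * K)^2 \<ge> 0\<close> by linarith+
  have "?x powr s \<le> ?x powr (- (1 / 2))"
    using s x by (intro powr_mono) auto
  also have "\<dots> = 1 / sqrt ?x"
    using x by (simp add: powr_minus_divide powr_half_sqrt)
  also have "\<dots> \<le> 1 / sqrt ((2 * K)^2)"
    using x K by (intro divide_left_mono real_sqrt_le_mono) auto
  also have "\<dots> = 1 / (2 * K)"
    using K by (subst real_sqrt_abs) simp
  finally have "K * ?x powr s \<le> K * (1 / (2 * K))"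
    using K by (intro mult_left_mono) auto
  with L1 show ?thesis
    using K that by simp
qed

lemma local_cut_prob_bounded_below:
  assumes d5: "CARD('d) \<ge> 5"
  obtains L :: nat and c :: real where "L \<ge> 1" "0 < c" "c \<le> 1"
    "\<And>m j. L \<le> m \<Longrightarrow> measure_pmf.prob (steps_pmf {j - int m<..j + int m} :: (int \<Rightarrow> int^'d) pmf) {f. local_cut m j f} \<ge> c"
proof -
  let ?d = "real CARD('d)"
  let ?K = "lclt_const CARD('d) * 2 powr (?d / 2) / (?d / 2 - 2)"
  have "?K > 0"
    using d5 lclt_const_pos[of "CARD('d)"] by simp
  then obtain L :: nat where L: "L \<ge> 1" "?K * real (2 * L - 1) powr (2 - ?d / 2) \<le> 1 / 2"
    using d5 exists_nat_powr_le_half[of ?K "2 - ?d / 2"] by auto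
  define c where "c = (1 / (2 * ?d)) ^ (2 * L) / 2"
  have "(1 / (2 * ?d)) ^ (2 * L) \<le> 1"
    using d5 by (intro power_le_one) auto
  then have c: "0 < c" "c \<le> 1"
    by (auto simp: c_def)
  have "c \<le> measure_pmf.prob (steps_pmf {j - int m<..j + int m} :: (int \<Rightarrow> int^'d) pmf) {f. local_cut m j f}"
    if "L \<le> m" for m j
  proof -
    let ?t = "lclt_const CARD('d) * 2 powr (?d / 2) * (real (2 * L - 1) powr (2 - ?d / 2) / (?d / 2 - 2))"
    have "1 / 2 \<le> 1 - ?t"
      using L(2) by (simp add: ac_simps)
    then have "(1 / (2 * ?d)) ^ (2 * L) * (1 / 2) \<le> (1 / (2 * ?d)) ^ (2 * L) * (1 - ?t)"
      by (rule mult_left_mono) simp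
    then have "c \<le> (1 / (2 * ?d)) ^ (2 * L) * (1 - ?t)"
      by (simp add: c_def)
    also have "\<dots> \<le> measure_pmf.prob (steps_pmf {j - int m<..j + int m} :: (int \<Rightarrow> int^'d) pmf) {f. local_cut m j f}"
      using d5 L(1) that by (rule prob_local_cut_ge)
    finally show ?thesis .
  qed
  with L(1) c that show ?thesis by blast
qed

section \<open>Cut times of the two-sided walk\<close>

lemma prob_closes_loop_le:
  fixes a b :: int
  assumes "a < b"
  shows "measure_pmf.prob (steps_pmf {a<..b} :: (int \<Rightarrow> int^'d) pmf) {f. closes_loop a b f}
         \<le> lclt_const CARD('d) * real (nat (b - a)) powr (- (real CARD('d) / 2))"
  unfolding closes_loop_def using prob_unit_sum_eq_le[of "{a<..b}" undefined 0] assms by simp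

lemma sets_closes_loop_event:
  "{\<omega> \<in> space two_walk_space. Q \<and> closes_loop a b (increment \<omega>)}
     \<in> sets (two_walk_space :: ((nat \<Rightarrow> int^'d) \<times> (nat \<Rightarrow> int^'d)) measure)"
  by (rule sets_increment_event[of "{a<..b}"])
    (simp_all add: determined_by_comp[OF determined_by_closes_loop])

lemma sets_long_loop_event:
  "{\<omega> \<in> space two_walk_space. \<exists>a b. a \<le> j \<and> j < b \<and> int m < b - a \<and> closes_loop a b (increment \<omega>)}
     \<in> sets (two_walk_space :: ((nat \<Rightarrow> int^'d) \<times> (nat \<Rightarrow> int^'d)) measure)"
proof -
  have "{\<omega> \<in> space two_walk_space. \<exists>a b. (a \<le> j \<and> j < b \<and> int m < b - a) \<and> closes_loop a b (increment \<omega>)}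
      \<in> sets (two_walk_space :: ((nat \<Rightarrow> int^'d) \<times> (nat \<Rightarrow> int^'d)) measure)"
    by (intro sets.sets_Collect_countable_Ex sets_closes_loop_event; simp)
  then show ?thesis
    by (simp only: conj_assoc)
qed

lemma UN_straddling_pairs_eq:
  fixes j :: int
  shows "(\<Union>R::nat. \<Union>p\<in>{j - int R..j} \<times> {j + 1..j + int R}. {x \<in> A. Q (fst p) (snd p) x}) =
         {x \<in> A. \<exists>a b. a \<le> j \<and> j < b \<and> Q a b x}"
proof (intro set_eqI iffI)
  fix x assume "x \<in> {x \<in> A. \<exists>a b. a \<le> j \<and> j < b \<and> Q a b x}"
  then obtain a b where "a \<le> j" "j < b" "x \<in> A" "Q a b x"
    by auto
  then have "(a, b) \<in> {j - int (nat (b - a))..j} \<times> {j + 1..j + int (nat (b - a))}" "x \<in> {x \<in> A. Q a b x}"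
    by auto
  then show "x \<in> (\<Union>R::nat. \<Union>p\<in>{j - int R..j} \<times> {j + 1..j + int R}. {x \<in> A. Q (fst p) (snd p) x})"
    by (intro UN_I[of "nat (b - a)"] UN_I[of "(a, b)"]) auto
next
  fix x assume "x \<in> (\<Union>R::nat. \<Union>p\<in>{j - int R..j} \<times> {j + 1..j + int R}. {x \<in> A. Q (fst p) (snd p) x})"
  then obtain R p where p: "p \<in> {j - int R..j} \<times> {j + 1..j + int R}" "x \<in> A" "Q (fst p) (snd p) x"
    by blast
  then show "x \<in> {x \<in> A. \<exists>a b. a \<le> j \<and> j < b \<and> Q a b x}"
    by (intro CollectI conjI exI[of _ "fst p"] exI[of _ "snd p"]) auto
qed

lemma measure_loop_event_le:
  assumes "m \<ge> 1"
  shows "measure (two_walk_space :: ((nat \<Rightarrow> int^'d) \<times> (nat \<Rightarrow> int^'d)) measure)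
           {\<omega> \<in> space two_walk_space. int m < b - a \<and> closes_loop a b (increment \<omega>)}
         \<le> (if m < nat (b - a) then lclt_const CARD('d) * real (nat (b - a)) powr (- (real CARD('d) / 2)) else 0)"
proof -
  have "measure (two_walk_space :: ((nat \<Rightarrow> int^'d) \<times> (nat \<Rightarrow> int^'d)) measure)
          {\<omega> \<in> space two_walk_space. int m < b - a \<and> closes_loop a b (increment \<omega>)}
      = measure_pmf.prob (steps_pmf {a<..b} :: (int \<Rightarrow> int^'d) pmf) {f. int m < b - a \<and> closes_loop a b f}"
    by (rule measure_increment_event) (simp_all add: determined_by_comp[OF determined_by_closes_loop])
  moreover have "measure_pmf.prob (steps_pmf {a<..b} :: (int \<Rightarrow> int^'d) pmf) {f. closes_loop a b f}
      \<le> lclt_const CARD('d) * real (nat (b - a)) powr (- (real CARD('d) / 2))" if "a < b"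
    using that by (rule prob_closes_loop_le)
  ultimately show ?thesis
    using assms by (cases "int m < b - a") simp_all
qed

lemma measure_long_loop_event_le:
  assumes d5: "CARD('d) \<ge> 5" and m: "m \<ge> 1"
  shows "measure (two_walk_space :: ((nat \<Rightarrow> int^'d) \<times> (nat \<Rightarrow> int^'d)) measure)
           {\<omega> \<in> space two_walk_space. \<exists>a b. a \<le> j \<and> j < b \<and> int m < b - a \<and> closes_loop a b (increment \<omega>)}
         \<le> lclt_const CARD('d) * (real m powr (2 - real CARD('d) / 2) / (real CARD('d) / 2 - 2))"
proof -
  let ?M = "two_walk_space :: ((nat \<Rightarrow> int^'d) \<times> (nat \<Rightarrow> int^'d)) measure"
  let ?d = "real CARD('d)"
  let ?w = "\<lambda>l. if m < l then lclt_const CARD('d) * real l powr (- (?d / 2)) else 0"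
  let ?P = "\<lambda>R::nat. {j - int R..j} \<times> {j + 1..j + int R}"
  define E where "E p = {\<omega> \<in> space ?M. int m < snd p - fst p \<and> closes_loop (fst p) (snd p) (increment \<omega>)}" for p
  define F where "F R = (\<Union>p\<in>?P R. E p)" for R
  interpret prob_space ?M by (rule prob_space_two_walk_space)
  have E: "E (a, b) \<in> events" "prob (E (a, b)) \<le> ?w (nat (b - a))" for a b
    unfolding E_def fst_conv snd_conv by (rule sets_closes_loop_event, rule measure_loop_event_le[OF m])
  have F: "F R \<in> events" for R
    unfolding F_def using E(1) by (intro sets.finite_UN) (auto simp: split_paired_all)
  have "prob (F R) \<le> lclt_const CARD('d) * (real m powr (2 - ?d / 2) / (?d / 2 - 2))" for R
  proof -
    have "prob (F R) \<le> (\<Sum>p\<in>?P R. prob (E p))"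
      unfolding F_def using E(1) by (intro measure_UNION_le) auto
    also have "\<dots> \<le> (\<Sum>p\<in>?P R. ?w (nat (snd p - fst p)))"
      by (intro sum_mono) (metis E(2) prod.collapse)
    also have "\<dots> = (\<Sum>a\<in>{j - int R..j}. \<Sum>b\<in>{j + 1..j + int R}. ?w (nat (b - a)))"
      by (simp add: sum.cartesian_product case_prod_beta)
    also have "\<dots> \<le> (\<Sum>l\<in>{1..2 * R}. real l * ?w l)"
      using lclt_const_pos[of "CARD('d)"] by (intro sum_straddling_pairs_le) auto
    also have "\<dots> \<le> lclt_const CARD('d) * (real m powr (2 - ?d / 2) / (?d / 2 - 2))"
      using d5 m lclt_const_pos[of "CARD('d)"] by (intro sum_weighted_tail_le) auto
    finally show ?thesis .
  qed
  moreover have "incseq F"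
    unfolding F_def by (rule incseq_SucI) (intro UN_mono; auto)
  then have "(\<lambda>R. prob (F R)) \<longlonglongrightarrow> prob (\<Union>R. F R)"
    using F by (intro finite_Lim_measure_incseq) auto
  ultimately have "prob (\<Union>R. F R) \<le> lclt_const CARD('d) * (real m powr (2 - ?d / 2) / (?d / 2 - 2))"
    by (intro LIMSEQ_le_const2) auto
  moreover have "(\<Union>R. F R) = {\<omega> \<in> space ?M. \<exists>a b. a \<le> j \<and> j < b \<and> int m < b - a \<and> closes_loop a b (increment \<omega>)}"
    unfolding F_def E_def by (rule UN_straddling_pairs_eq)
  ultimately show ?thesis by simp
qed

definition window_centre :: "nat \<Rightarrow> nat \<Rightarrow> int" where
  "window_centre m k = int m + 2 * int m * int k"

lemma disjoint_family_on_windows: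
  assumes m: "m \<ge> 1"
  shows "disjoint_family_on (\<lambda>k. {window_centre m k - int m<..window_centre m k + int m}) I"
  unfolding disjoint_family_on_def
proof (intro ballI impI)
  fix k k' assume "k \<in> I" "k' \<in> I" "k \<noteq> k'"
  show "{window_centre m k - int m<..window_centre m k + int m} \<inter> {window_centre m k' - int m<..window_centre m k' + int m} = {}"
  proof (rule ccontr)
    assume "{window_centre m k - int m<..window_centre m k + int m} \<inter> {window_centre m k' - int m<..window_centre m k' + int m} \<noteq> {}"
    then obtain t where "t \<in> {window_centre m k - int m<..window_centre m k + int m} \<inter> {window_centre m k' - int m<..window_centre m k' + int m}"
      by blast
    then have t: "int m * (2 * int k) < t" "t \<le> int m * (2 * int k + 2)"
      "int m * (2 * int k') < t" "t \<le> int m * (2 * int k' + 2)"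
      by (auto simp: window_centre_def algebra_simps)
    have mp: "int m > 0" using m by simp
    have "int m * (2 * int k) < int m * (2 * int k' + 2)" using t by linarith
    then have "2 * int k < 2 * int k' + 2" using mp by (simp add: mult_less_cancel_left_pos)
    moreover have "int m * (2 * int k') < int m * (2 * int k + 2)" using t by linarith
    then have "2 * int k' < 2 * int k + 2" using mp by (simp add: mult_less_cancel_left_pos)
    ultimately have "k = k'" by linarith
    then show False using \<open>k \<noteq> k'\<close> by simp
  qed
qed

lemma sets_no_local_cut_event:
  "{\<omega> \<in> space two_walk_space. \<forall>k\<in>{..<K}. \<not> local_cut m (window_centre m k) (increment \<omega>)}
     \<in> sets (two_walk_space :: ((nat \<Rightarrow> int^'d) \<times> (nat \<Rightarrow> int^'d)) measure)"
  by (rule sets_increment_event[of "\<Union>k\<in>{..<K}. {window_centre m k - int m<..window_centre m k + int m}"])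
    (auto intro!: determined_by_Ball determined_by_comp[OF determined_by_local_cut])

lemma measure_no_local_cut_event_le:
  fixes c :: real
  assumes m: "m \<ge> 1"
    and c: "\<And>j. measure_pmf.prob (steps_pmf {j - int m<..j + int m} :: (int \<Rightarrow> int^'d) pmf) {f. local_cut m j f} \<ge> c"
  shows "measure (two_walk_space :: ((nat \<Rightarrow> int^'d) \<times> (nat \<Rightarrow> int^'d)) measure)
           {\<omega> \<in> space two_walk_space. \<forall>k\<in>{..<K}. \<not> local_cut m (window_centre m k) (increment \<omega>)} \<le> (1 - c) ^ K"
proof -
  let ?W = "\<lambda>k. {window_centre m k - int m<..window_centre m k + int m}"
  have "measure (two_walk_space :: ((nat \<Rightarrow> int^'d) \<times> (nat \<Rightarrow> int^'d)) measure)
           {\<omega> \<in> space two_walk_space. \<forall>k\<in>{..<K}. \<not> local_cut m (window_centre m k) (increment \<omega>)}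
      = measure_pmf.prob (steps_pmf (\<Union>k\<in>{..<K}. ?W k) :: (int \<Rightarrow> int^'d) pmf)
          {f. \<forall>k\<in>{..<K}. \<not> local_cut m (window_centre m k) f}"
    by (rule measure_increment_event) (auto intro!: determined_by_Ball determined_by_comp[OF determined_by_local_cut])
  also have "\<dots> = (\<Prod>k\<in>{..<K}. measure_pmf.prob (steps_pmf (?W k) :: (int \<Rightarrow> int^'d) pmf)
                      {f. \<not> local_cut m (window_centre m k) f})"
    using disjoint_family_on_windows[OF m]
    by (intro prob_Pi_pmf_UN_indep) (auto intro: determined_by_comp[OF determined_by_local_cut])
  also have "\<dots> \<le> (\<Prod>k\<in>{..<K}. 1 - c)"
  proof (intro prod_mono conjI)
    fix k
    have "measure_pmf.prob (steps_pmf (?W k) :: (int \<Rightarrow> int^'d) pmf) {f. \<not> local_cut m (window_centre m k) f}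
        = 1 - measure_pmf.prob (steps_pmf (?W k) :: (int \<Rightarrow> int^'d) pmf) {f. local_cut m (window_centre m k) f}"
      using measure_pmf.prob_compl[of "{f. local_cut m (window_centre m k) f}" "steps_pmf (?W k) :: (int \<Rightarrow> int^'d) pmf"]
      by (simp add: Compl_eq_Diff_UNIV[symmetric] Collect_neg_eq)
    then show "measure_pmf.prob (steps_pmf (?W k) :: (int \<Rightarrow> int^'d) pmf) {f. \<not> local_cut m (window_centre m k) f} \<le> 1 - c"
      using c[of "window_centre m k"] by simp
  qed simp
  finally show ?thesis by simp
qed

lemma sets_cut_time_event:
  "{\<omega> \<in> space two_walk_space. \<exists>j \<in> {1 .. int N}. two_sided \<omega> ` {.. j} \<inter> two_sided \<omega> ` {j + 1 ..} = {}}
     \<in> sets (two_walk_space :: ((nat \<Rightarrow> int^'d) \<times> (nat \<Rightarrow> int^'d)) measure)"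
proof -
  have "{\<omega> \<in> space two_walk_space. a \<le> j \<longrightarrow> j < b \<longrightarrow> \<not> closes_loop a b (increment \<omega>)}
      \<in> sets (two_walk_space :: ((nat \<Rightarrow> int^'d) \<times> (nat \<Rightarrow> int^'d)) measure)" for a b j
    using determined_by_comp[OF determined_by_closes_loop, of a b "\<lambda>x. a \<le> j \<longrightarrow> j < b \<longrightarrow> \<not> x"]
    by (intro sets_increment_event[of "{a<..b}"]) simp_all
  then have "{\<omega> \<in> space two_walk_space. \<exists>j \<in> {1 .. int N}. \<forall>a b. a \<le> j \<longrightarrow> j < b \<longrightarrow> \<not> closes_loop a b (increment \<omega>)}
      \<in> sets (two_walk_space :: ((nat \<Rightarrow> int^'d) \<times> (nat \<Rightarrow> int^'d)) measure)"
    by (intro sets.sets_Collect_finite_Ex sets.sets_Collect_countable_All) simp_all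
  then show ?thesis
    by (simp add: cut_time_iff closes_loop_def)
qed

lemma window_centre_mem:
  assumes "m \<ge> 1" "k < K" "2 * m * K \<le> N"
  shows "window_centre m k \<in> {1 .. int N}"
proof -
  have "2 * m * (k + 1) \<le> 2 * m * K"
    using assms(2) by (intro mult_left_mono) auto
  then have "m + 2 * m * k \<le> N"
    using assms(3) by (simp add: algebra_simps)
  then have "int (m + 2 * m * k) \<le> int N"
    by (simp only: of_nat_le_iff)
  then have "int m + 2 * int m * int k \<le> int N"
    by simp
  moreover have "0 \<le> int m * int k" "1 \<le> int m"
    using assms(1) by simp_all
  ultimately show ?thesis
    unfolding window_centre_def atLeastAtMost_iff by linarith
qed

lemma long_loop_if_no_cut_time:
  assumes "\<not> two_sided \<omega> ` {.. j} \<inter> two_sided \<omega> ` {j + 1 ..} = {}" "local_cut m j (increment \<omega>)"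
  shows "\<exists>a b. a \<le> j \<and> j < b \<and> int m < b - a \<and> closes_loop a b (increment \<omega>)"
proof -
  obtain a b where ab: "a \<le> j" "j < b" "closes_loop a b (increment \<omega>)"
    using assms(1) by (auto simp: cut_time_iff closes_loop_def)
  moreover have "int m < b - a"
  proof (rule ccontr)
    assume "\<not> int m < b - a"
    then have "a \<in> {j - int m..j}" "b \<in> {j + 1..j + int m}" using ab by auto
    then show False using assms(2) ab by (auto simp: local_cut_def)
  qed
  ultimately show ?thesis by blast
qed

lemma prob_cut_time_ge:
  fixes m K N :: nat and c :: real
  assumes d5: "CARD('d) \<ge> 5" and m: "m \<ge> 1" and N: "2 * m * K \<le> N"
    and c: "\<And>j. measure_pmf.prob (steps_pmf {j - int m<..j + int m} :: (int \<Rightarrow> int^'d) pmf) {f. local_cut m j f} \<ge> c"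
  shows "measure (two_walk_space :: ((nat \<Rightarrow> int^'d) \<times> (nat \<Rightarrow> int^'d)) measure)
           {\<omega> \<in> space two_walk_space. \<exists>j \<in> {1 .. int N}. two_sided \<omega> ` {.. j} \<inter> two_sided \<omega> ` {j + 1 ..} = {}}
     \<ge> 1 - (1 - c) ^ K - real K * (lclt_const CARD('d) * (real m powr (2 - real CARD('d) / 2) / (real CARD('d) / 2 - 2)))"
proof -
  let ?M = "two_walk_space :: ((nat \<Rightarrow> int^'d) \<times> (nat \<Rightarrow> int^'d)) measure"
  let ?T = "{\<omega> \<in> space ?M. \<exists>j \<in> {1 .. int N}. two_sided \<omega> ` {.. j} \<inter> two_sided \<omega> ` {j + 1 ..} = {}}"
  let ?none = "{\<omega> \<in> space ?M. \<forall>k\<in>{..<K}. \<not> local_cut m (window_centre m k) (increment \<omega>)}"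
  let ?long = "\<lambda>j. {\<omega> \<in> space ?M. \<exists>a b. a \<le> j \<and> j < b \<and> int m < b - a \<and> closes_loop a b (increment \<omega>)}"
  interpret prob_space ?M by (rule prob_space_two_walk_space)
  have sets: "?T \<in> events" "?none \<in> events" "(\<Union>k\<in>{..<K}. ?long (window_centre m k)) \<in> events"
    using sets_cut_time_event sets_no_local_cut_event sets_long_loop_event by (auto intro!: sets.finite_UN)
  have "space ?M - ?T \<subseteq> ?none \<union> (\<Union>k\<in>{..<K}. ?long (window_centre m k))"
  proof
    fix \<omega> assume \<omega>: "\<omega> \<in> space ?M - ?T"
    show "\<omega> \<in> ?none \<union> (\<Union>k\<in>{..<K}. ?long (window_centre m k))"
    proof (cases "\<omega> \<in> ?none")
      case False
      then obtain k where k: "k < K" "local_cut m (window_centre m k) (increment \<omega>)"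
        by auto
      then have "\<not> two_sided \<omega> ` {.. window_centre m k} \<inter> two_sided \<omega> ` {window_centre m k + 1 ..} = {}"
        using \<omega> window_centre_mem[OF m k(1) N] by auto
      then have "\<omega> \<in> ?long (window_centre m k)"
        using long_loop_if_no_cut_time[OF _ k(2)] by simp
      then show ?thesis
        using k(1) by blast
    qed simp
  qed
  then have "prob (space ?M - ?T) \<le> prob (?none \<union> (\<Union>k\<in>{..<K}. ?long (window_centre m k)))"
    using sets by (intro finite_measure_mono) auto
  also have "\<dots> \<le> prob ?none + prob (\<Union>k\<in>{..<K}. ?long (window_centre m k))"
    using sets by (intro measure_Un_le) auto
  also have "prob (\<Union>k\<in>{..<K}. ?long (window_centre m k)) \<le> (\<Sum>k\<in>{..<K}. prob (?long (window_centre m k)))"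
    using sets_long_loop_event by (intro measure_UNION_le) auto
  also have "\<dots> \<le> (\<Sum>k\<in>{..<K}. lclt_const CARD('d) * (real m powr (2 - real CARD('d) / 2) / (real CARD('d) / 2 - 2)))"
    by (intro sum_mono measure_long_loop_event_le[OF d5 m])
  also have "prob ?none \<le> (1 - c) ^ K"
    using m c by (rule measure_no_local_cut_event_le)
  finally show ?thesis
    using prob_compl[OF sets(1)] by simp
qed

section \<open>Choice of the window length\<close>

lemma one_minus_power_le_powr:
  fixes c s :: real and K N :: nat
  assumes c: "0 < c" "c \<le> 1" and K: "real K \<ge> s / c * ln (real N)" and N: "N \<ge> 1"
  shows "(1 - c) ^ K \<le> real N powr (- s)"
proof -
  have "(1 - c) ^ K \<le> exp (- c) ^ K"
    using exp_ge_add_one_self[of "- c"] c by (intro power_mono) auto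
  also have "\<dots> = exp (- (c * real K))"
    by (simp flip: exp_of_nat_mult)
  also have "\<dots> \<le> exp (- (s * ln (real N)))"
    using K c by (simp add: field_simps)
  also have "\<dots> = real N powr (- s)"
    using N by (simp add: powr_def)
  finally show ?thesis .
qed

lemma mult_powr_neg_le:
  fixes s :: real and m K N :: nat
  assumes s: "s \<ge> 0" and K: "K \<ge> 1" and N: "N \<ge> 1" and NKm: "real N \<le> 4 * real K * real m"
  shows "real K * real m powr (- s) \<le> 4 powr s * real K powr (s + 1) * real N powr (- s)"
proof -
  have pos: "real N / (4 * real K) > 0"
    using N K by simp
  have "real m powr (- s) \<le> (real N / (4 * real K)) powr (- s)"
    using s pos NKm K by (intro powr_mono2') (auto simp: field_simps)
  also have "\<dots> = 4 powr s * real K powr s * real N powr (- s)"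
    using N K by (simp add: powr_divide powr_minus powr_mult field_simps)
  finally have "real K * real m powr (- s) \<le> real K * (4 powr s * real K powr s * real N powr (- s))"
    by (intro mult_left_mono) auto
  also have "\<dots> = 4 powr s * (real K * real K powr s) * real N powr (- s)"
    by (simp add: ac_simps)
  also have "real K * real K powr s = real K powr (s + 1)"
    using K by (simp add: powr_add)
  finally show ?thesis .
qed

lemma nat_ceiling_ln_bounds:
  fixes \<beta> :: real and N :: nat
  assumes \<beta>: "\<beta> > 0" and N: "N \<ge> 2"
  defines "K \<equiv> nat \<lceil>\<beta> * ln (real N)\<rceil>"
  shows "K \<ge> 1" "\<beta> * ln (real N) \<le> real K" "real K \<le> \<beta> * ln (real N) + 1"
    "real K \<le> (\<beta> + 1 / ln 2) * ln (real N)"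
proof -
  have ln: "ln 2 \<le> ln (real N)" "0 < ln (2 :: real)"
    using N by simp_all
  then have "ln (real N) > 0"
    by linarith
  then have pos: "\<beta> * ln (real N) > 0"
    using \<beta> by simp
  then have K: "real K = real_of_int \<lceil>\<beta> * ln (real N)\<rceil>"
    by (simp add: K_def)
  show "\<beta> * ln (real N) \<le> real K" "real K \<le> \<beta> * ln (real N) + 1"
    unfolding K by linarith+
  then show "K \<ge> 1"
    using pos by linarith
  have "1 \<le> ln (real N) / ln 2"
    using ln by simp
  moreover have "(\<beta> + 1 / ln 2) * ln (real N) = \<beta> * ln (real N) + ln (real N) / ln 2"
    by (simp add: algebra_simps)
  ultimately show "real K \<le> (\<beta> + 1 / ln 2) * ln (real N)"
    using \<open>real K \<le> \<beta> * ln (real N) + 1\<close> by linarith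
qed

lemma window_error_le:
  fixes s c B :: real and m K N :: nat
  assumes s: "s > 0" and c: "0 < c" "c \<le> 1" and B: "B \<ge> 0" and N: "N \<ge> 2" and m: "m \<ge> 1"
    and K: "K = nat \<lceil>s / c * ln (real N)\<rceil>" and NKm: "real N \<le> 4 * real K * real m"
  shows "(1 - c) ^ K + B * (real K * real m powr (- s))
    \<le> ((1 / ln 2) powr (s + 1) + B * 4 powr s * (s / c + 1 / ln 2) powr (s + 1)) * ln (real N) powr (s + 1) * real N powr (- s)"
proof -
  have \<beta>: "s / c > 0" using s c by simp
  note Kb = nat_ceiling_ln_bounds[OF \<beta> N, folded K]
  have lnN: "ln 2 \<le> ln (real N)" "0 < ln (2 :: real)"
    using N by simp_all
  have "1 \<le> (1 / ln 2 * ln (real N)) powr (s + 1)"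
    using lnN s by (intro ge_one_powr_ge_zero) (auto simp: field_simps)
  also have "\<dots> = (1 / ln 2) powr (s + 1) * ln (real N) powr (s + 1)"
    by (rule powr_mult)
  finally have one: "1 \<le> (1 / ln 2) powr (s + 1) * ln (real N) powr (s + 1)" .
  have "real K powr (s + 1) \<le> ((s / c + 1 / ln 2) * ln (real N)) powr (s + 1)"
    using Kb(4) s by (intro powr_mono2) auto
  then have Kpow: "real K powr (s + 1) \<le> (s / c + 1 / ln 2) powr (s + 1) * ln (real N) powr (s + 1)"
    by (simp add: powr_mult)
  have "(1 - c) ^ K \<le> 1 * real N powr (- s)"
    using one_minus_power_le_powr[OF c Kb(2)] N by simp
  also have "\<dots> \<le> (1 / ln 2) powr (s + 1) * ln (real N) powr (s + 1) * real N powr (- s)"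
    using one by (intro mult_right_mono) auto
  finally have geom: "(1 - c) ^ K \<le> (1 / ln 2) powr (s + 1) * ln (real N) powr (s + 1) * real N powr (- s)" .
  have "real K * real m powr (- s) \<le> 4 powr s * real K powr (s + 1) * real N powr (- s)"
    using s Kb(1) N NKm by (intro mult_powr_neg_le) auto
  also have "\<dots> \<le> 4 powr s * ((s / c + 1 / ln 2) powr (s + 1) * ln (real N) powr (s + 1)) * real N powr (- s)"
    using Kpow by (intro mult_right_mono mult_left_mono) auto
  finally have "B * (real K * real m powr (- s))
      \<le> B * (4 powr s * ((s / c + 1 / ln 2) powr (s + 1) * ln (real N) powr (s + 1)) * real N powr (- s))"
    using B by (intro mult_left_mono)
  with geom show ?thesis
    by (simp add: algebra_simps)
qed

lemma lt_sq_of_lt_log_bound: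
  fixes \<beta> :: real and K L N :: nat
  assumes \<beta>: "\<beta> \<ge> 0" and N: "N \<ge> 1" and K: "real K \<le> \<beta> * ln (real N) + 1" and NKL: "N < 2 * K * L"
  shows "real N < (2 * real L * (2 * \<beta> + 1))^2"
proof -
  have sqrt: "sqrt (real N) \<ge> 1" and "ln (real N) \<le> 2 * sqrt (real N)"
    using N ln_powr_bound[of "real N" "1 / 2"] by (simp_all add: powr_half_sqrt)
  then have "\<beta> * ln (real N) \<le> \<beta> * (2 * sqrt (real N))"
    using \<beta> by (intro mult_left_mono)
  moreover have "(2 * \<beta> + 1) * sqrt (real N) = \<beta> * (2 * sqrt (real N)) + sqrt (real N)"
    by (simp add: algebra_simps)
  ultimately have Ksqrt: "real K \<le> (2 * \<beta> + 1) * sqrt (real N)"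
    using K sqrt by linarith
  have "real N < real (2 * K * L)"
    using NKL by (simp only: of_nat_less_iff)
  then have "sqrt (real N) * sqrt (real N) < 2 * real L * real K"
    by (simp add: mult_ac)
  also have "\<dots> \<le> 2 * real L * ((2 * \<beta> + 1) * sqrt (real N))"
    using Ksqrt by (intro mult_left_mono) auto
  finally have "sqrt (real N) * sqrt (real N) < (2 * real L * (2 * \<beta> + 1)) * sqrt (real N)"
    by (simp add: ac_simps)
  then have "sqrt (real N) < 2 * real L * (2 * \<beta> + 1)"
    by (rule mult_right_less_imp_less) simp
  then have "sqrt (real N) ^ 2 < (2 * real L * (2 * \<beta> + 1))^2"
    by (rule power_strict_mono) auto
  then show ?thesis
    by simp
qed

lemma one_le_polylog_if_bounded:
  fixes s A :: real and N :: nat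
  assumes s: "s > 0" and N: "N \<ge> 2" and NA: "real N < A^2"
  shows "1 \<le> (A^2) powr s / ln 2 powr (s + 1) * (ln (real N) powr (s + 1) * real N powr (- s))"
proof -
  have "0 < real N"
    using N by simp
  moreover have "0 < A^2"
    using \<open>0 < real N\<close> NA by linarith
  ultimately have pos: "0 < ln (2 :: real)" "0 < real N" "0 < A^2"
    by simp_all
  have "ln 2 powr (s + 1) \<le> ln (real N) powr (s + 1)"
    using s N pos by (intro powr_mono2) auto
  moreover have "(A^2) powr (- s) \<le> real N powr (- s)"
    using s NA pos by (intro powr_mono2') auto
  ultimately have le: "ln 2 powr (s + 1) * (A^2) powr (- s) \<le> ln (real N) powr (s + 1) * real N powr (- s)"
    by (intro mult_mono) auto
  have "1 = (A^2) powr s / ln 2 powr (s + 1) * (ln 2 powr (s + 1) * (A^2) powr (- s))"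
    using pos by (simp add: powr_minus field_simps)
  also have "\<dots> \<le> (A^2) powr s / ln 2 powr (s + 1) * (ln (real N) powr (s + 1) * real N powr (- s))"
    by (rule mult_left_mono[OF le]) simp
  finally show ?thesis .
qed

lemma div_window_bounds:
  fixes K N :: nat
  assumes "K \<ge> 1"
  defines "m \<equiv> N div (2 * K)"
  shows "2 * m * K \<le> N" "N < 2 * K * (m + 1)" "m \<ge> 1 \<Longrightarrow> real N \<le> 4 * real K * real m"
proof -
  show "2 * m * K \<le> N"
    using div_times_less_eq_dividend[of N "2 * K"] by (simp add: m_def ac_simps)
  have "N mod (2 * K) < 2 * K"
    using assms(1) by simp
  then show "N < 2 * K * (m + 1)"
    using div_mult_mod_eq[of N "2 * K"] by (simp add: m_def algebra_simps; linarith)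
  moreover assume "m \<ge> 1"
  then have "2 * K \<le> 2 * K * m"
    by simp
  moreover have "2 * K * (m + 1) = 2 * K + 2 * K * m"
    by (simp add: algebra_simps)
  ultimately have "N \<le> 4 * K * m"
    by linarith
  then have "real N \<le> real (4 * K * m)"
    by (simp only: of_nat_le_iff)
  then show "real N \<le> 4 * real K * real m"
    by simp
qed

text \<open>With \<open>K \<approx> (s/c) log N\<close> windows of length \<open>2m \<approx> N/K\<close> both error terms are
  \<open>O((log N)^(s+1) N^(-s))\<close>; if the windows would be shorter than \<open>L\<close>, then \<open>N\<close> is bounded and the
  claim holds for a large enough constant.\<close>

lemma polylog_bound_of_window_bound:
  fixes p :: "nat \<Rightarrow> real" and s c B :: real and L :: nat
  assumes s: "s > 0" and c: "0 < c" "c \<le> 1" and L: "L \<ge> 1" and B: "B \<ge> 0"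
    and nonneg: "\<And>N. 0 \<le> p N"
    and window: "\<And>N m K. L \<le> m \<Longrightarrow> 2 * m * K \<le> N \<Longrightarrow> 1 - (1 - c) ^ K - B * (real K * real m powr (- s)) \<le> p N"
  obtains C :: real where "C > 0" "\<And>N. N \<ge> 2 \<Longrightarrow> 1 - C * ln (real N) powr (s + 1) * real N powr (- s) \<le> p N"
proof -
  define \<beta> where "\<beta> = s / c"
  define C1 where "C1 = (1 / ln 2) powr (s + 1) + B * 4 powr s * (\<beta> + 1 / ln 2) powr (s + 1)"
  define C2 where "C2 = ((2 * real L * (2 * \<beta> + 1))^2) powr s / ln 2 powr (s + 1)"
  have \<beta>: "\<beta> > 0" using s c by (simp add: \<beta>_def)
  have C: "C1 > 0" "C2 > 0"
    using B \<beta> L by (auto simp: C1_def C2_def intro!: add_pos_nonneg)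
  have "1 - (C1 + C2) * ln (real N) powr (s + 1) * real N powr (- s) \<le> p N" if N: "N \<ge> 2" for N
  proof -
    define K where "K = nat \<lceil>\<beta> * ln (real N)\<rceil>"
    define m where "m = N div (2 * K)"
    let ?R = "ln (real N) powr (s + 1) * real N powr (- s)"
    note Kb = nat_ceiling_ln_bounds[OF \<beta> N, folded K_def]
    note mb = div_window_bounds[OF Kb(1), of N, folded m_def]
    have R: "?R \<ge> 0" and split: "(C1 + C2) * ln (real N) powr (s + 1) * real N powr (- s) = C1 * ?R + C2 * ?R"
      by (simp_all add: algebra_simps)
    show ?thesis
    proof (cases "L \<le> m")
      case True
      then have "(1 - c) ^ K + B * (real K * real m powr (- s)) \<le> C1 * ?R"
        using window_error_le[OF s c B N, of m K] mb(3) L by (simp add: K_def \<beta>_def C1_def mult.assoc)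
      then show ?thesis
        using window[OF True mb(1)] split mult_nonneg_nonneg[OF less_imp_le[OF C(2)] R] by linarith
    next
      case False
      then have "2 * K * (m + 1) \<le> 2 * K * L"
        by (intro mult_left_mono) auto
      then have "real N < (2 * real L * (2 * \<beta> + 1))^2"
        using \<beta> N Kb(3) mb(2) by (intro lt_sq_of_lt_log_bound) auto
      then have "1 \<le> C2 * ?R"
        unfolding C2_def using s N by (rule one_le_polylog_if_bounded[rotated 2])
      then show ?thesis
        using nonneg[of N] split mult_nonneg_nonneg[OF less_imp_le[OF C(1)] R] by linarith
    qed
  qed
  then show ?thesis
    using C that[of "C1 + C2"] by simp
qed

theorem mainTheorem4:
  assumes "CARD('d) \<ge> 5"
  shows "\<exists>\<xi> C :: real. 0 < \<xi> \<and> 0 < C \<and>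
    (\<forall>N :: nat. N \<ge> 2 \<longrightarrow>
      measure (two_walk_space :: ((nat \<Rightarrow> int ^ 'd) \<times> (nat \<Rightarrow> int ^ 'd)) measure)
        {\<omega> \<in> space two_walk_space. \<exists>j \<in> {1 .. int N}.
           two_sided \<omega> ` {.. j} \<inter> two_sided \<omega> ` {j + 1 ..} = {}}
      \<ge> 1 - C * ln (real N) powr \<xi> * real N powr ((4 - real CARD('d)) / 2))"
proof -
  let ?p = "\<lambda>N. measure (two_walk_space :: ((nat \<Rightarrow> int ^ 'd) \<times> (nat \<Rightarrow> int ^ 'd)) measure)
    {\<omega> \<in> space two_walk_space. \<exists>j \<in> {1 .. int N}. two_sided \<omega> ` {.. j} \<inter> two_sided \<omega> ` {j + 1 ..} = {}}"
  define s where "s = (real CARD('d) - 4) / 2"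
  have s: "s > 0" "2 - real CARD('d) / 2 = - s" "real CARD('d) / 2 - 2 = s" "(4 - real CARD('d)) / 2 = - s"
    using assms unfolding s_def by (auto simp: field_simps)
  obtain L c where L: "L \<ge> 1" and c: "0 < c" "c \<le> 1"
    and local_cut: "\<And>m j. L \<le> m \<Longrightarrow> c \<le> measure_pmf.prob (steps_pmf {j - int m<..j + int m} :: (int \<Rightarrow> int^'d) pmf) {f. local_cut m j f}"
    using local_cut_prob_bounded_below[OF assms] by blast
  have B: "lclt_const CARD('d) / s \<ge> 0"
    using lclt_const_pos[of "CARD('d)"] s(1) by simp
  have window: "1 - (1 - c) ^ K - lclt_const CARD('d) / s * (real K * real m powr (- s)) \<le> ?p N"
    if "L \<le> m" "2 * m * K \<le> N" for N m K
    using prob_cut_time_ge[OF assms _ that(2) local_cut[OF that(1)]] L that(1) by (simp add: s(2,3) mult_ac)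
  obtain C where "C > 0" "\<And>N. N \<ge> 2 \<Longrightarrow> 1 - C * ln (real N) powr (s + 1) * real N powr (- s) \<le> ?p N"
    using polylog_bound_of_window_bound[where p = ?p, OF s(1) c L B measure_nonneg window] by blast
  then show ?thesis
    using s(1,4) by (intro exI[of _ "s + 1"] exI[of _ C]) auto
qed

end
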